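(* Setting: $\Phi(w)=f(w)+g(w)+h(w)$ on $\mathbb{R}^d$ with $f=\frac1n\sum_{j=1}^n f_j$, each $f_j$ $L$-smooth; $g:\mathbb{R}^d\to\mathbb{R}$ such that for every $\lambda>0$ and $w$ the minimum of $x\mapsto\frac{1}{2\lambda}\|w-x\|_2^2+g(x)$ is attained at a chosen point $\zeta^\lambda(w)$; $h$ proper, closed, convex. Let $e_\lambda g(w)=\frac{1}{2\lambda}\|w-\zeta^\lambda(w)\|_2^2+g(\zeta^\lambda(w))$, $\tilde\Phi_\lambda=f+e_\lambda g+h$, and assume $\tilde\Phi_\lambda$ has a global minimizer $w^*_\lambda$. Algorithm VRSPA with positive integers $S$ (number of epochs), $m$ (epoch length), batch size $b=m^2$, $\theta\in\mathbb{R}$, $\lambda=(Sm)^{-\theta}$, $L_\lambda=L+(Sm)^\theta$, $\gamma=\frac{1}{6L_\lambda}$, initial point $\tilde w^1$: for $k=1,\dots,S$: set $w^k_1=\tilde w^k$, $G^k=\nabla f(\tilde w^k)$; for $t=1,\dots,m$: draw a multiset $I$ of $b$ indices i.i.d. uniformly from $\{1,\dots,n\}$ (independent of the past), set $V^k_t=\frac1b\sum_{j\in I}\left(\nabla f_j(w^k_t)-\nabla f_j(\tilde w^k)\right)+G^k+\frac1\lambda\left(w^k_t-\zeta^\lambda(w^k_t)\right)$ and $w^k_{t+1}=\operatorname{prox}_{\gamma h}(w^k_t-\gamma V^k_t)$; then set $\tilde w^{k+1}=w^k_{m+1}$. Finally draw $(R,T)$ uniformly from $\{1,\dots,S\}\times\{1,\dots,m\}$.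 Claim: with $\mathcal{G}^{R,T}_{\gamma,E}(w^R_T):=\frac1\gamma\left(w^R_T-\operatorname{prox}_{\gamma h}\left(w^R_T-\gamma\left(\nabla f(w^R_T)+\frac1\lambda(w^R_T-\zeta^\lambda(w^R_T))\right)\right)\right)$, $$\mathbb{E}\|\mathcal{G}^{R,T}_{\gamma,E}(w^R_T)\|_2^2\le\tilde{\mathcal{D}}\,\frac{L+(Sm)^\theta}{Sm},$$ where $\tilde{\mathcal{D}}=36\left(\tilde\Phi_\lambda(\tilde w^1)-\tilde\Phi_\lambda(w^*_\lambda)\right)$.
   Context: $\operatorname{prox}_{\gamma h}(v)=\arg\min_x\left(\frac{1}{2\gamma}\|v-x\|_2^2+h(x)\right)$. A function is $L$-smooth if it is differentiable with $L$-Lipschitz gradient. *)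

theory Defs
  imports "HOL-Analysis.Analysis" "HOL-Probability.Probability"
begin

definition proper_fun :: "('a \<Rightarrow> ereal) \<Rightarrow> bool" where
  "proper_fun h \<longleftrightarrow> (\<forall>x. h x > -\<infinity>) \<and> (\<exists>x. h x < \<infinity>)"

definition closed_fun :: "('a::topological_space \<Rightarrow> ereal) \<Rightarrow> bool" where
  "closed_fun h \<longleftrightarrow> closed {(x, r::real). h x \<le> ereal r}"

definition convex_fun :: "('a::real_vector \<Rightarrow> ereal) \<Rightarrow> bool" where
  "convex_fun h \<longleftrightarrow> (\<forall>x y. \<forall>t::real. 0 \<le> t \<and> t \<le> 1 \<longrightarrow>
      h ((1 - t) *\<^sub>R x + t *\<^sub>R y) \<le> ereal (1 - t) * h x + ereal t * h y)"

definition prox :: "real \<Rightarrow> ('a::real_normed_vector \<Rightarrow> ereal) \<Rightarrow> 'a \<Rightarrow> 'a" where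
  "prox \<gamma> h v = (THE x. \<forall>y. ereal (1 / (2 * \<gamma>) * (norm (v - x))\<^sup>2) + h x
                             \<le> ereal (1 / (2 * \<gamma>) * (norm (v - y))\<^sup>2) + h y)"

definition full_grad :: "nat \<Rightarrow> (nat \<Rightarrow> 'a \<Rightarrow> 'a::real_vector) \<Rightarrow> 'a \<Rightarrow> 'a" where
  "full_grad n df x = (1 / real n) *\<^sub>R (\<Sum>j=1..n. df j x)"

text \<open>Inner loop of VRSPA in epoch k starting from the snapshot wt (= tilde w^k).
  \<open>vrspa_inner \<dots> wt k t\<close> is w^k_{t+1}.  The sample \<open>\<omega> (k, t, i)\<close>, i = 1..b, is the
  i-th index of the multiset I drawn at inner step t of epoch k.\<close>
fun vrspa_inner :: "nat \<Rightarrow> nat \<Rightarrow> (nat \<Rightarrow> 'a \<Rightarrow> 'a::real_normed_vector) \<Rightarrow> (real \<Rightarrow> 'a \<Rightarrow> 'a)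
    \<Rightarrow> ('a \<Rightarrow> ereal) \<Rightarrow> real \<Rightarrow> real \<Rightarrow> (nat \<times> nat \<times> nat \<Rightarrow> nat) \<Rightarrow> 'a \<Rightarrow> nat \<Rightarrow> nat \<Rightarrow> 'a" where
  "vrspa_inner n b df \<zeta> h lam \<gamma> \<omega> wt k 0 = wt"
| "vrspa_inner n b df \<zeta> h lam \<gamma> \<omega> wt k (Suc t) =
     (let w = vrspa_inner n b df \<zeta> h lam \<gamma> \<omega> wt k t;
          V = (1 / real b) *\<^sub>R (\<Sum>i=1..b. df (\<omega> (k, Suc t, i)) w - df (\<omega> (k, Suc t, i)) wt)
              + full_grad n df wt + (1 / lam) *\<^sub>R (w - \<zeta> lam w)
      in prox \<gamma> h (w - \<gamma> *\<^sub>R V))"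

text \<open>Snapshots: \<open>vrspa_snap \<dots> w1 k\<close> = tilde w^k for k \<ge> 1.\<close>
fun vrspa_snap :: "nat \<Rightarrow> nat \<Rightarrow> nat \<Rightarrow> (nat \<Rightarrow> 'a \<Rightarrow> 'a::real_normed_vector) \<Rightarrow> (real \<Rightarrow> 'a \<Rightarrow> 'a)
    \<Rightarrow> ('a \<Rightarrow> ereal) \<Rightarrow> real \<Rightarrow> real \<Rightarrow> (nat \<times> nat \<times> nat \<Rightarrow> nat) \<Rightarrow> 'a \<Rightarrow> nat \<Rightarrow> 'a" where
  "vrspa_snap n m b df \<zeta> h lam \<gamma> \<omega> w1 0 = w1"
| "vrspa_snap n m b df \<zeta> h lam \<gamma> \<omega> w1 (Suc 0) = w1"
| "vrspa_snap n m b df \<zeta> h lam \<gamma> \<omega> w1 (Suc (Suc k)) =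
     vrspa_inner n b df \<zeta> h lam \<gamma> \<omega> (vrspa_snap n m b df \<zeta> h lam \<gamma> \<omega> w1 (Suc k)) (Suc k) m"

text \<open>Iterate w^k_t (k \<ge> 1, 1 \<le> t \<le> m+1).\<close>
definition vrspa_iter :: "nat \<Rightarrow> nat \<Rightarrow> nat \<Rightarrow> (nat \<Rightarrow> 'a \<Rightarrow> 'a::real_normed_vector) \<Rightarrow> (real \<Rightarrow> 'a \<Rightarrow> 'a)
    \<Rightarrow> ('a \<Rightarrow> ereal) \<Rightarrow> real \<Rightarrow> real \<Rightarrow> (nat \<times> nat \<times> nat \<Rightarrow> nat) \<Rightarrow> 'a \<Rightarrow> nat \<Rightarrow> nat \<Rightarrow> 'a" where
  "vrspa_iter n m b df \<zeta> h lam \<gamma> \<omega> w1 k t =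
     vrspa_inner n b df \<zeta> h lam \<gamma> \<omega> (vrspa_snap n m b df \<zeta> h lam \<gamma> \<omega> w1 k) k (t - 1)"

definition sample_pmf :: "nat \<Rightarrow> nat \<Rightarrow> nat \<Rightarrow> nat \<Rightarrow> (nat \<times> nat \<times> nat \<Rightarrow> nat) pmf" where
  "sample_pmf n S m b = Pi_pmf ({1..S} \<times> {1..m} \<times> {1..b}) 0 (\<lambda>_. pmf_of_set {1..n})"

definition env :: "real \<Rightarrow> ('a::real_normed_vector \<Rightarrow> real) \<Rightarrow> (real \<Rightarrow> 'a \<Rightarrow> 'a) \<Rightarrow> 'a \<Rightarrow> real" where
  "env lam g \<zeta> w = 1 / (2 * lam) * (norm (w - \<zeta> lam w))\<^sup>2 + g (\<zeta> lam w)"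

end

theory Submission
  imports Defs
begin

text \<open>
  Each inner step of VRSPA is a proximal gradient step on the smoothed objective
  \<open>\<Phi> = f + e\<^sub>\<lambda> g + h\<close>. Its smooth part has a quadratic upper model with constant
  \<open>L\<^sub>\<lambda> = L + 1/\<lambda>\<close>, because the Moreau envelope lies below the quadratic built from the chosen
  minimiser \<open>\<zeta>\<^sup>\<lambda>\<close>. The minibatch estimate is a mean of b i.i.d. centred samples, so its mean
  squared error is at most \<open>L\<^sup>2/b \<parallel>w - v\<parallel>\<^sup>2\<close>, v being the snapshot. With weights \<open>c\<^sub>t\<close> from a
  backward recursion, \<open>\<Phi>(w\<^sub>t) + c\<^sub>t \<parallel>w\<^sub>t - v\<parallel>\<^sup>2\<close> decreases in expectation by
  \<open>\<gamma>/6 \<parallel>G(w\<^sub>t)\<parallel>\<^sup>2\<close> per step, and \<open>b = m\<^sup>2\<close> keeps the \<open>c\<^sub>t\<close> small enough for this.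
  Telescoping over all S m steps and \<open>\<Phi> \<ge> \<Phi>(w\<^sup>*)\<close> gives the bound, with \<open>6/\<gamma> = 36 L\<^sub>\<lambda>\<close>.
  As prox is defined by THE, one also needs that the proximal objective has a unique minimiser:
  a proper closed convex h lies above a cone, which makes the objective coercive.
\<close>

lemma quadratic_growth_bound:
  fixes s a B C :: real
  assumes "0 \<le> a" "0 \<le> B" "0 \<le> C" and growth: "s > a \<Longrightarrow> (s - a)\<^sup>2 \<le> C + B * s"
  shows "s \<le> 3 * a + B + C + 1"
proof (cases "s \<le> a + 1")
  case False
  then have s: "1 \<le> s" "a < s" using assms by auto
  have "(s - a)\<^sup>2 = s * s - 2 * a * s + a * a"
    by (simp add: power2_eq_square algebra_simps)
  then have "s * s \<le> (2 * a + B + C) * s"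
    using growth[OF s(2)] zero_le_square[of a] mult_left_mono[of 1 s C] s assms
    by (smt (verit) distrib_right)
  then have "s \<le> 2 * a + B + C"
    using s by (simp add: mult_le_cancel_right)
  with assms show ?thesis by simp
qed (use assms in simp)

lemma le_if_le_plus_small_multiple:
  fixes A B c :: real
  assumes "\<And>t. 0 < t \<Longrightarrow> t \<le> 1 \<Longrightarrow> A \<le> B + t * c"
  shows "A \<le> B"
proof (rule field_le_epsilon)
  fix e :: real
  assume "0 < e"
  define t where "t = min 1 (e / (\<bar>c\<bar> + 1))"
  have t: "0 < t" "t \<le> 1" using \<open>0 < e\<close> by (auto simp: t_def)
  have "t * c \<le> t * \<bar>c\<bar>"
    using t by (simp add: mult_left_mono)
  also have "\<dots> \<le> e / (\<bar>c\<bar> + 1) * \<bar>c\<bar>"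
    by (intro mult_right_mono) (auto simp: t_def)
  also have "\<dots> \<le> e"
    using \<open>0 < e\<close> by (simp add: field_simps)
  finally show "A \<le> B + e"
    using assms[OF t] by simp
qed

lemma power2_norm_diff:
  fixes x y :: "'a::real_inner"
  shows "(norm (x - y))\<^sup>2 = (norm x)\<^sup>2 - 2 * (x \<bullet> y) + (norm y)\<^sup>2"
  by (simp add: power2_norm_eq_inner inner_diff_left inner_diff_right inner_commute)

lemma power2_norm_add:
  fixes x y :: "'a::real_inner"
  shows "(norm (x + y))\<^sup>2 = (norm x)\<^sup>2 + 2 * (x \<bullet> y) + (norm y)\<^sup>2"
  by (simp add: power2_norm_eq_inner inner_add_left inner_add_right inner_commute)

lemma inner_le_weighted_squares:
  fixes x y :: "'a::real_inner"
  assumes "a > 0"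
  shows "x \<bullet> y \<le> a * (norm x)\<^sup>2 + (norm y)\<^sup>2 / (4 * a)"
proof -
  have "(norm ((2 * a) *\<^sub>R x - y))\<^sup>2 = 4 * a\<^sup>2 * (norm x)\<^sup>2 - 4 * a * (x \<bullet> y) + (norm y)\<^sup>2"
    by (simp add: power2_norm_diff power_mult_distrib)
  then have "0 \<le> 4 * a\<^sup>2 * (norm x)\<^sup>2 - 4 * a * (x \<bullet> y) + (norm y)\<^sup>2"
    by (metis zero_le_power2)
  then show ?thesis
    using assms by (simp add: field_simps power2_eq_square)
qed

lemma power2_norm_add_le_weighted:
  fixes x y :: "'a::real_inner"
  assumes "a > 0"
  shows "(norm (x + y))\<^sup>2 \<le> (1 + a) * (norm x)\<^sup>2 + (1 + 1 / a) * (norm y)\<^sup>2"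
proof -
  have "x \<bullet> y \<le> a / 2 * (norm x)\<^sup>2 + (norm y)\<^sup>2 / (4 * (a / 2))"
    using assms by (intro inner_le_weighted_squares) simp
  then show ?thesis
    using assms by (simp add: power2_norm_add field_simps)
qed

lemma one_plus_inverse_power_le_3:
  assumes "m > 0" "i \<le> m"
  shows "(1 + 1 / real m) ^ i \<le> 3"
proof -
  have "(1 + 1 / real m) ^ i \<le> (1 + 1 / real m) ^ m"
    using assms by (intro power_increasing) auto
  also have "\<dots> \<le> exp 1"
    using assms by (intro exp_ge_one_plus_x_over_n_power_n) auto
  also have "\<dots> \<le> 3"
    by (rule exp_le)
  finally show ?thesis .
qed

section \<open>Proximal operator of a proper closed convex function\<close>

lemma closed_fun_sublevel:
  fixes h :: "'a::real_normed_vector \<Rightarrow> ereal"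
  assumes "closed_fun h"
  shows "closed {x. h x \<le> ereal c}"
proof -
  have "{x. h x \<le> ereal c} = (\<lambda>x. (x, c)) -` {(x, r). h x \<le> ereal r}" by auto
  also have "closed \<dots>"
    using assms unfolding closed_fun_def
    by (intro continuous_closed_vimage) (auto intro!: continuous_intros)
  finally show ?thesis .
qed

definition prox_objective :: "real \<Rightarrow> ('a::real_normed_vector \<Rightarrow> ereal) \<Rightarrow> 'a \<Rightarrow> 'a \<Rightarrow> ereal" where
  "prox_objective \<gamma> h v x = ereal (1 / (2 * \<gamma>) * (norm (v - x))\<^sup>2) + h x"

lemma prox_eq_The_minimizer:
  "prox \<gamma> h v = (THE p. \<forall>y. prox_objective \<gamma> h v p \<le> prox_objective \<gamma> h v y)"
  by (simp add: prox_def prox_objective_def)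

lemma le_prox_objective: "\<gamma> > 0 \<Longrightarrow> h x \<le> prox_objective \<gamma> h v x"
  by (simp add: prox_objective_def add_increasing)

lemma prox_objective_finite:
  "h x = ereal a \<Longrightarrow> prox_objective \<gamma> h v x = ereal (1 / (2 * \<gamma>) * (norm (v - x))\<^sup>2 + a)"
  by (simp add: prox_objective_def)

lemma prox_objective_sublevel_dist_bound:
  fixes h :: "'a::real_normed_vector \<Rightarrow> ereal"
  assumes "\<gamma> > 0" "\<delta> > 0" and minor: "\<And>x. ereal (c - 1 - norm (x - x0) / \<delta>) \<le> h x"
    and y: "prox_objective \<gamma> h v y \<le> ereal Q"
  shows "norm (y - x0) \<le> 3 * norm (v - x0) + 2 * \<gamma> / \<delta> + 2 * \<gamma> * max 0 (Q - c + 1) + 1"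
proof -
  define s where "s = norm (y - x0)"
  have "h y \<noteq> \<infinity>" "h y \<noteq> -\<infinity>"
    using y le_prox_objective[OF assms(1), of h y v] minor[of y] by auto
  then obtain b where hy: "h y = ereal b"
    by (cases "h y") auto
  have lower: "c - 1 - s / \<delta> \<le> b"
    using minor[of y] hy by (simp add: s_def)
  have "1 / (2 * \<gamma>) * (norm (v - y))\<^sup>2 + b \<le> Q"
    using y by (simp add: prox_objective_finite[where h = h, OF hy])
  then have "(norm (v - y))\<^sup>2 \<le> 2 * \<gamma> * (Q - b)"
    using assms by (simp add: field_simps)
  also have "\<dots> \<le> 2 * \<gamma> * (Q - c + 1 + s / \<delta>)"
    using assms lower by simp
  also have "\<dots> = 2 * \<gamma> * (Q - c + 1) + 2 * \<gamma> / \<delta> * s"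
    using assms by (simp add: field_simps)
  also have "\<dots> \<le> 2 * \<gamma> * max 0 (Q - c + 1) + 2 * \<gamma> / \<delta> * s"
    using assms by (simp add: mult_left_mono)
  finally have vy: "(norm (v - y))\<^sup>2 \<le> 2 * \<gamma> * max 0 (Q - c + 1) + 2 * \<gamma> / \<delta> * s" .
  have "(s - norm (v - x0))\<^sup>2 \<le> 2 * \<gamma> * max 0 (Q - c + 1) + 2 * \<gamma> / \<delta> * s"
    if "s > norm (v - x0)"
  proof -
    have "s - norm (v - x0) \<le> norm (v - y)"
      using norm_triangle_ineq[of "y - v" "v - x0"] by (simp add: s_def norm_minus_commute)
    then have "(s - norm (v - x0))\<^sup>2 \<le> (norm (v - y))\<^sup>2"
      using that by (intro power_mono) auto
    with vy show ?thesis
      by simp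
  qed
  then show ?thesis
    unfolding s_def[symmetric] using assms by (intro quadratic_growth_bound) auto
qed

locale proper_closed_convex =
  fixes h :: "'a::euclidean_space \<Rightarrow> ereal"
  assumes proper: "proper_fun h" and closed: "closed_fun h" and convex: "convex_fun h"
begin

lemma greater_minf: "h x > -\<infinity>"
  using proper by (simp add: proper_fun_def)

lemma finite_somewhere:
  obtains x0 c where "h x0 = ereal c"
proof -
  obtain x0 where "h x0 < \<infinity>"
    using proper by (auto simp: proper_fun_def)
  with greater_minf[of x0] show ?thesis
    using that by (cases "h x0") auto
qed

lemma ereal_real_of_ereal [simp]: "h x < \<infinity> \<Longrightarrow> ereal (real_of_ereal (h x)) = h x"
  using greater_minf[of x] by (cases "h x") auto

lemma convex_finite:
  assumes "0 \<le> t" "t \<le> 1" "h x = ereal a" "h y = ereal b"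
  shows "h ((1 - t) *\<^sub>R x + t *\<^sub>R y) \<le> ereal ((1 - t) * a + t * b)"
proof -
  have "h ((1 - t) *\<^sub>R x + t *\<^sub>R y) \<le> ereal (1 - t) * h x + ereal t * h y"
    using convex assms(1,2) unfolding convex_fun_def by blast
  with assms(3,4) show ?thesis
    by simp
qed

lemma lower_bound_from_ball:
  assumes h0: "h x0 = ereal c" and "\<delta> > 0"
    and near: "\<And>y. norm (y - x0) < \<delta> \<Longrightarrow> ereal (c - 1) < h y"
  shows "ereal (c - 1 - norm (x - x0) / (\<delta> / 2)) \<le> h x"
proof (cases "norm (x - x0) < \<delta>")
  case True
  have "ereal (c - 1 - norm (x - x0) / (\<delta> / 2)) \<le> ereal (c - 1)"
    using \<open>\<delta> > 0\<close> by simp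
  also have "\<dots> \<le> h x"
    using near[OF True] by simp
  finally show ?thesis .
next
  case False
  show ?thesis
  proof (cases "h x")
    case (real a)
    \<comment> \<open>the point at distance \<delta>/2 from x0 on the segment towards x\<close>
    define t where "t = \<delta> / (2 * norm (x - x0))"
    have far: "\<delta> \<le> norm (x - x0)"
      using False by simp
    then have t: "0 < t" "t \<le> 1"
      using \<open>\<delta> > 0\<close> by (auto simp: t_def divide_simps)
    have "(1 - t) *\<^sub>R x0 + t *\<^sub>R x - x0 = t *\<^sub>R (x - x0)"
      by (simp add: algebra_simps)
    then have "norm ((1 - t) *\<^sub>R x0 + t *\<^sub>R x - x0) = \<delta> / 2"
      using far \<open>\<delta> > 0\<close> t by (auto simp: t_def)
    then have "ereal (c - 1) < h ((1 - t) *\<^sub>R x0 + t *\<^sub>R x)"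
      using \<open>\<delta> > 0\<close> by (intro near) simp
    also have "\<dots> \<le> ereal ((1 - t) * c + t * a)"
      using convex_finite[OF less_imp_le[OF t(1)] t(2) h0 real] .
    finally have "c - 1 < (1 - t) * c + t * a"
      by simp
    then have "c - 1 / t < a"
      using t by (simp add: field_simps)
    moreover have "1 / t = norm (x - x0) / (\<delta> / 2)"
      using far \<open>\<delta> > 0\<close> by (simp add: t_def field_simps)
    ultimately show ?thesis
      using real by simp
  qed (use greater_minf[of x] in auto)
qed

lemma cone_minorant:
  assumes h0: "h x0 = ereal c"
  obtains \<delta> where "\<delta> > 0" "\<And>x. ereal (c - 1 - norm (x - x0) / \<delta>) \<le> h x"
proof -
  have "open (- {x. h x \<le> ereal (c - 1)})"
    using closed_fun_sublevel[OF closed] by (simp add: open_Compl)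
  moreover have "x0 \<in> - {x. h x \<le> ereal (c - 1)}"
    using h0 by simp
  ultimately obtain \<delta> where "\<delta> > 0" and ball: "ball x0 \<delta> \<subseteq> - {x. h x \<le> ereal (c - 1)}"
    using open_contains_ball by blast
  have "ereal (c - 1) < h y" if "norm (y - x0) < \<delta>" for y
    using ball that by (auto simp: dist_norm norm_minus_commute)
  then have "ereal (c - 1 - norm (x - x0) / (\<delta> / 2)) \<le> h x" for x
    by (rule lower_bound_from_ball[OF h0 \<open>\<delta> > 0\<close>])
  with \<open>\<delta> > 0\<close> show ?thesis
    using that[of "\<delta> / 2"] by simp
qed

lemma prox_objective_sublevel_bounded:
  assumes "\<gamma> > 0"
  obtains R lo where "\<And>y. prox_objective \<gamma> h v y \<le> ereal Q \<Longrightarrow> norm y \<le> R \<and> ereal lo \<le> h y"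
proof -
  obtain x0 c where h0: "h x0 = ereal c"
    by (rule finite_somewhere)
  obtain \<delta> where "\<delta> > 0" and minor: "\<And>x. ereal (c - 1 - norm (x - x0) / \<delta>) \<le> h x"
    using cone_minorant[OF h0] by blast
  define R where "R = 3 * norm (v - x0) + 2 * \<gamma> / \<delta> + 2 * \<gamma> * max 0 (Q - c + 1) + 1"
  show ?thesis
  proof (rule that)
    fix y
    assume y: "prox_objective \<gamma> h v y \<le> ereal Q"
    then have "norm (y - x0) \<le> R"
      unfolding R_def by (rule prox_objective_sublevel_dist_bound[OF assms \<open>\<delta> > 0\<close> minor])
    then have "c - 1 - R / \<delta> \<le> c - 1 - norm (y - x0) / \<delta>"
      using \<open>\<delta> > 0\<close> by (simp add: divide_right_mono)
    then have "ereal (c - 1 - R / \<delta>) \<le> h y"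
      using minor[of y] by (metis ereal_less_eq(3) order_trans)
    with \<open>norm (y - x0) \<le> R\<close> show "norm y \<le> norm x0 + R \<and> ereal (c - 1 - R / \<delta>) \<le> h y"
      using norm_triangle_sub[of y x0] by simp
  qed
qed

lemma prox_objective_min_on_sublevel:
  assumes "\<gamma> > 0" and x0: "prox_objective \<gamma> h v x0 \<le> ereal Q"
  obtains p where "\<And>y. prox_objective \<gamma> h v y \<le> ereal Q \<Longrightarrow> prox_objective \<gamma> h v p \<le> prox_objective \<gamma> h v y"
proof -
  obtain R lo where bnd: "\<And>y. prox_objective \<gamma> h v y \<le> ereal Q \<Longrightarrow> norm y \<le> R \<and> ereal lo \<le> h y"
    using prox_objective_sublevel_bounded[OF assms(1)] by blast
  define \<phi> where "\<phi> = (\<lambda>(x, r). 1 / (2 * \<gamma>) * (norm (v - x))\<^sup>2 + r)"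
  \<comment> \<open>minimise the continuous \<phi> over a compact piece of the closed epigraph of h\<close>
  define K where "K = {(x, r). h x \<le> ereal r} \<inter> (cball 0 R \<times> {lo..Q})"
  have in_K: "(y, real_of_ereal (h y)) \<in> K"
    and obj_eq: "prox_objective \<gamma> h v y = ereal (\<phi> (y, real_of_ereal (h y)))"
    if y: "prox_objective \<gamma> h v y \<le> ereal Q" for y
  proof -
    have "h y \<le> ereal Q"
      using le_prox_objective[OF assms(1), of h y v] y by simp
    then have fin: "ereal (real_of_ereal (h y)) = h y"
      by (intro ereal_real_of_ereal) auto
    have "lo \<le> real_of_ereal (h y)" "real_of_ereal (h y) \<le> Q"
      using bnd[OF y] \<open>h y \<le> ereal Q\<close> by (metis ereal_less_eq(3) fin)+
    then show "(y, real_of_ereal (h y)) \<in> K"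
      using bnd[OF y] fin by (simp add: K_def)
    show "prox_objective \<gamma> h v y = ereal (\<phi> (y, real_of_ereal (h y)))"
      by (subst prox_objective_finite[where h = h, OF fin[symmetric]]) (simp add: \<phi>_def)
  qed
  have "compact K"
    unfolding K_def using closed unfolding closed_fun_def
    by (intro closed_Int_compact compact_Times compact_cball compact_Icc) auto
  moreover have "continuous_on K \<phi>"
    unfolding \<phi>_def using assms by (auto intro!: continuous_intros simp: case_prod_beta)
  ultimately obtain z where z: "z \<in> K" "\<forall>y\<in>K. \<phi> z \<le> \<phi> y"
    using continuous_attains_inf[of K \<phi>] in_K[OF x0] by blast
  obtain p r where "z = (p, r)"
    by (cases z)
  with z have pr: "(p, r) \<in> K" and pr_min: "\<And>y. y \<in> K \<Longrightarrow> \<phi> (p, r) \<le> \<phi> y"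
    by auto
  have obj_p: "prox_objective \<gamma> h v p \<le> ereal (\<phi> (p, r))"
    using pr add_left_mono[of "h p" "ereal r" "ereal (1 / (2 * \<gamma>) * (norm (v - p))\<^sup>2)"]
    by (simp add: K_def prox_objective_def \<phi>_def)
  show ?thesis
  proof (rule that)
    fix y
    assume y: "prox_objective \<gamma> h v y \<le> ereal Q"
    have "\<phi> (p, r) \<le> \<phi> (y, real_of_ereal (h y))"
      using pr_min[OF in_K[OF y]] .
    with obj_p show "prox_objective \<gamma> h v p \<le> prox_objective \<gamma> h v y"
      unfolding obj_eq[OF y] using order_trans ereal_less_eq(3) by blast
  qed
qed

lemma prox_objective_attains_min:
  assumes "\<gamma> > 0"
  obtains p where "\<And>y. prox_objective \<gamma> h v p \<le> prox_objective \<gamma> h v y"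
proof -
  obtain x0 c where h0: "h x0 = ereal c"
    by (rule finite_somewhere)
  define Q where "Q = 1 / (2 * \<gamma>) * (norm (v - x0))\<^sup>2 + c"
  have x0: "prox_objective \<gamma> h v x0 = ereal Q"
    by (simp add: prox_objective_finite[where h = h, OF h0] Q_def)
  obtain p where p: "\<And>y. prox_objective \<gamma> h v y \<le> ereal Q \<Longrightarrow> prox_objective \<gamma> h v p \<le> prox_objective \<gamma> h v y"
    using prox_objective_min_on_sublevel[OF assms, of v x0 Q] x0 by auto
  have "prox_objective \<gamma> h v p \<le> prox_objective \<gamma> h v y" for y
  proof (cases "prox_objective \<gamma> h v y \<le> ereal Q")
    case False
    with p[of x0] show ?thesis
      unfolding x0 by simp
  qed (rule p)
  with that show ?thesis
    by blast
qed

lemma minimizer_variational_ineq: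
  assumes "\<gamma> > 0" and p: "\<And>y. prox_objective \<gamma> h v p \<le> prox_objective \<gamma> h v y"
    and "h z < \<infinity>"
  shows "h p < \<infinity>"
    and "real_of_ereal (h p) \<le> real_of_ereal (h z) - (v - p) \<bullet> (z - p) / \<gamma>"
proof -
  obtain b where hz: "h z = ereal b"
    using \<open>h z < \<infinity>\<close> greater_minf[of z] by (cases "h z") auto
  have "h p \<le> prox_objective \<gamma> h v z"
    using le_prox_objective[OF assms(1), of h p v] p[of z] by simp
  then show "h p < \<infinity>"
    unfolding prox_objective_finite[where h = h, OF hz] by (rule le_less_trans) simp
  then obtain a where hp: "h p = ereal a"
    using greater_minf[of p] by (cases "h p") auto
  define w where "w = z - p"
  have "a \<le> b - (v - p) \<bullet> w / \<gamma> + t * ((norm w)\<^sup>2 / (2 * \<gamma>))"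
    if t: "0 < t" "t \<le> 1" for t
  proof -
    define y where "y = (1 - t) *\<^sub>R p + t *\<^sub>R z"
    have vy: "v - y = (v - p) - t *\<^sub>R w"
      by (simp add: y_def w_def algebra_simps)
    have "(norm (v - y))\<^sup>2 = (norm (v - p))\<^sup>2 - 2 * t * ((v - p) \<bullet> w) + t\<^sup>2 * (norm w)\<^sup>2"
      unfolding vy using power2_norm_diff[of "v - p" "t *\<^sub>R w"] by (simp add: power_mult_distrib mult.assoc)
    then have sq: "1 / (2 * \<gamma>) * (norm (v - y))\<^sup>2 = 1 / (2 * \<gamma>) * (norm (v - p))\<^sup>2
        - t * ((v - p) \<bullet> w / \<gamma>) + t * (t * ((norm w)\<^sup>2 / (2 * \<gamma>)))"
      using assms(1) by (simp add: field_simps power2_eq_square)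
    have "ereal (1 / (2 * \<gamma>) * (norm (v - p))\<^sup>2 + a) \<le> prox_objective \<gamma> h v y"
      using p[of y] by (simp add: prox_objective_finite[where h = h, OF hp])
    also have "\<dots> \<le> ereal (1 / (2 * \<gamma>) * (norm (v - y))\<^sup>2) + ereal ((1 - t) * a + t * b)"
      unfolding prox_objective_def y_def
      using convex_finite[OF _ t(2) hp hz] t(1) by (intro add_left_mono) simp
    finally have "1 / (2 * \<gamma>) * (norm (v - p))\<^sup>2 + a
        \<le> 1 / (2 * \<gamma>) * (norm (v - y))\<^sup>2 + ((1 - t) * a + t * b)"
      by simp
    then have "t * a \<le> t * (b - (v - p) \<bullet> w / \<gamma> + t * ((norm w)\<^sup>2 / (2 * \<gamma>)))"
      unfolding sq by (simp add: algebra_simps)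
    then show ?thesis
      using t by simp
  qed
  then have "a \<le> b - (v - p) \<bullet> w / \<gamma>"
    by (rule le_if_le_plus_small_multiple)
  then show "real_of_ereal (h p) \<le> real_of_ereal (h z) - (v - p) \<bullet> (z - p) / \<gamma>"
    by (simp add: hp hz w_def)
qed

lemma minimizer_dist_le:
  assumes "\<gamma> > 0"
    and p1: "\<And>y. prox_objective \<gamma> h v1 p1 \<le> prox_objective \<gamma> h v1 y"
    and p2: "\<And>y. prox_objective \<gamma> h v2 p2 \<le> prox_objective \<gamma> h v2 y"
  shows "norm (p1 - p2) \<le> norm (v1 - v2)"
proof -
  obtain x0 c where "h x0 = ereal c"
    by (rule finite_somewhere)
  then have "h x0 < \<infinity>"
    by simp
  then have fin: "h p1 < \<infinity>" "h p2 < \<infinity>"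
    using minimizer_variational_ineq(1)[OF assms(1) p1] minimizer_variational_ineq(1)[OF assms(1) p2]
    by blast+
  have "real_of_ereal (h p1) \<le> real_of_ereal (h p2) - (v1 - p1) \<bullet> (p2 - p1) / \<gamma>"
    by (rule minimizer_variational_ineq(2)[OF assms(1) p1 fin(2)])
  moreover have "real_of_ereal (h p2) \<le> real_of_ereal (h p1) - (v2 - p2) \<bullet> (p1 - p2) / \<gamma>"
    by (rule minimizer_variational_ineq(2)[OF assms(1) p2 fin(1)])
  ultimately have "((v1 - p1) \<bullet> (p2 - p1) + (v2 - p2) \<bullet> (p1 - p2)) / \<gamma> \<le> 0"
    by (simp add: add_divide_distrib)
  then have "(v1 - p1) \<bullet> (p2 - p1) + (v2 - p2) \<bullet> (p1 - p2) \<le> 0"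
    using assms(1) by (simp add: divide_le_0_iff)
  then have "norm (p1 - p2) * norm (p1 - p2) \<le> (v1 - v2) \<bullet> (p1 - p2)"
    by (simp add: power2_norm_eq_inner inner_diff_left inner_diff_right inner_commute
        flip: power2_eq_square)
  also have "\<dots> \<le> norm (v1 - v2) * norm (p1 - p2)"
    by (rule norm_cauchy_schwarz)
  finally show ?thesis
    by (cases "p1 = p2") (auto simp: mult_le_cancel_right)
qed

lemma prox_minimizes:
  assumes "\<gamma> > 0"
  shows "prox_objective \<gamma> h v (prox \<gamma> h v) \<le> prox_objective \<gamma> h v y"
proof -
  obtain p where p: "\<And>y. prox_objective \<gamma> h v p \<le> prox_objective \<gamma> h v y"
    using prox_objective_attains_min[OF assms] by blast
  have "prox \<gamma> h v = p"
    unfolding prox_eq_The_minimizer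
  proof (rule the_equality)
    fix q
    assume "\<forall>y. prox_objective \<gamma> h v q \<le> prox_objective \<gamma> h v y"
    then show "q = p"
      using minimizer_dist_le[OF assms, of v q v p] p by simp
  qed (use p in blast)
  with p show ?thesis
    by simp
qed

lemma prox_finite:
  assumes "\<gamma> > 0"
  shows "h (prox \<gamma> h v) < \<infinity>"
proof -
  obtain x0 c where "h x0 = ereal c"
    by (rule finite_somewhere)
  then show ?thesis
    using minimizer_variational_ineq(1)[OF assms prox_minimizes[OF assms], of x0] by simp
qed

lemma prox_variational_ineq:
  "\<gamma> > 0 \<Longrightarrow> h z < \<infinity> \<Longrightarrow>
    real_of_ereal (h (prox \<gamma> h v)) \<le> real_of_ereal (h z) - (v - prox \<gamma> h v) \<bullet> (z - prox \<gamma> h v) / \<gamma>"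
  by (rule minimizer_variational_ineq(2)[OF _ prox_minimizes])

lemma prox_nonexpansive: "\<gamma> > 0 \<Longrightarrow> norm (prox \<gamma> h v1 - prox \<gamma> h v2) \<le> norm (v1 - v2)"
  by (rule minimizer_dist_le[OF _ prox_minimizes prox_minimizes])

lemma gradient_mapping_perturbation:
  assumes "\<gamma> > 0"
  shows "norm ((1 / \<gamma>) *\<^sub>R (w - prox \<gamma> h (w - \<gamma> *\<^sub>R u)))
    \<le> norm (w - prox \<gamma> h (w - \<gamma> *\<^sub>R v)) / \<gamma> + norm (v - u)"
proof -
  have "norm (prox \<gamma> h (w - \<gamma> *\<^sub>R v) - prox \<gamma> h (w - \<gamma> *\<^sub>R u)) \<le> \<gamma> * norm (v - u)"
    using prox_nonexpansive[OF assms, of "w - \<gamma> *\<^sub>R v" "w - \<gamma> *\<^sub>R u"] assms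
    by (simp add: norm_minus_commute flip: scaleR_diff_right)
  then have "norm (w - prox \<gamma> h (w - \<gamma> *\<^sub>R u)) \<le> norm (w - prox \<gamma> h (w - \<gamma> *\<^sub>R v)) + \<gamma> * norm (v - u)"
    using norm_triangle_ineq[of "w - prox \<gamma> h (w - \<gamma> *\<^sub>R v)"
        "prox \<gamma> h (w - \<gamma> *\<^sub>R v) - prox \<gamma> h (w - \<gamma> *\<^sub>R u)"] by simp
  moreover have "norm ((1 / \<gamma>) *\<^sub>R (w - prox \<gamma> h (w - \<gamma> *\<^sub>R u)))
      = norm (w - prox \<gamma> h (w - \<gamma> *\<^sub>R u)) / \<gamma>"
    using assms by simp
  ultimately show ?thesis
    using assms by (simp add: field_simps)
qed

lemma prox_grad_step_descent:
  fixes F :: "'a \<Rightarrow> real"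
  assumes "\<gamma> > 0" and "h w < \<infinity>"
    and y: "y = prox \<gamma> h (w - \<gamma> *\<^sub>R v)"
    and F_upper: "F y \<le> F w + u \<bullet> (y - w) + M * (norm (y - w))\<^sup>2"
  shows "real_of_ereal (h y) + F y
    \<le> real_of_ereal (h w) + F w + \<gamma> * (norm (v - u))\<^sup>2 - (3 / (4 * \<gamma>) - M) * (norm (y - w))\<^sup>2"
proof -
  have "real_of_ereal (h y) \<le> real_of_ereal (h w) - (w - \<gamma> *\<^sub>R v - y) \<bullet> (w - y) / \<gamma>"
    unfolding y by (rule prox_variational_ineq[OF assms(1,2)])
  also have "(w - \<gamma> *\<^sub>R v - y) \<bullet> (w - y) / \<gamma> = (norm (y - w))\<^sup>2 / \<gamma> + v \<bullet> (y - w)"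
    using assms(1) by (simp add: power2_norm_eq_inner inner_diff_left inner_diff_right
        inner_add_left inner_add_right inner_commute field_simps)
  finally have h_step: "real_of_ereal (h y) \<le> real_of_ereal (h w) - (norm (y - w))\<^sup>2 / \<gamma> - v \<bullet> (y - w)"
    by simp
  have "(u - v) \<bullet> (y - w) \<le> \<gamma> * (norm (u - v))\<^sup>2 + (norm (y - w))\<^sup>2 / (4 * \<gamma>)"
    by (rule inner_le_weighted_squares[OF assms(1)])
  moreover have "(u - v) \<bullet> (y - w) = u \<bullet> (y - w) - v \<bullet> (y - w)"
    by (simp add: inner_diff_left)
  moreover have "(3 / (4 * \<gamma>) - M) * (norm (y - w))\<^sup>2
      = (norm (y - w))\<^sup>2 / \<gamma> - (norm (y - w))\<^sup>2 / (4 * \<gamma>) - M * (norm (y - w))\<^sup>2"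
    using assms(1) by (simp add: field_simps)
  ultimately show ?thesis
    using h_step F_upper by (simp add: norm_minus_commute)
qed

end

section \<open>Smoothness and the Moreau envelope\<close>

text \<open>The mean value theorem yields the constant L instead of the sharp L/2; the weaker model
  suffices for the step size \<open>1/(6 L\<^sub>\<lambda>)\<close>.\<close>
lemma lipschitz_gradient_upper_bound:
  fixes f :: "'a::real_inner \<Rightarrow> real"
  assumes grad: "\<And>x. (f has_derivative (\<lambda>v. df x \<bullet> v)) (at x)"
    and lipschitz: "\<And>x y. norm (df x - df y) \<le> L * norm (x - y)" and "L \<ge> 0"
  shows "f y \<le> f x + df x \<bullet> (y - x) + L * (norm (y - x))\<^sup>2"
proof -
  define \<phi> where "\<phi> s = f (x + s *\<^sub>R (y - x))" for s :: real
  have "(\<phi> has_derivative (\<lambda>t. df (x + s *\<^sub>R (y - x)) \<bullet> (t *\<^sub>R (y - x)))) (at s within {0..1})" for s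
    unfolding \<phi>_def
    by (rule has_derivative_at_withinI, rule has_derivative_compose[OF _ grad])
       (auto intro!: derivative_eq_intros)
  from mvt_simple[of 0 1 \<phi>, OF _ this] obtain \<xi> where \<xi>: "0 < \<xi>" "\<xi> < 1"
    and "\<phi> 1 - \<phi> 0 = df (x + \<xi> *\<^sub>R (y - x)) \<bullet> (y - x)"
    by auto
  then have "f y - f x = df x \<bullet> (y - x) + (df (x + \<xi> *\<^sub>R (y - x)) - df x) \<bullet> (y - x)"
    by (simp add: \<phi>_def inner_diff_left)
  also have "(df (x + \<xi> *\<^sub>R (y - x)) - df x) \<bullet> (y - x)
      \<le> norm (df (x + \<xi> *\<^sub>R (y - x)) - df x) * norm (y - x)"
    by (rule norm_cauchy_schwarz)
  also have "\<dots> \<le> L * (\<xi> * norm (y - x)) * norm (y - x)"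
    using lipschitz[of "x + \<xi> *\<^sub>R (y - x)" x] \<xi> by (intro mult_right_mono) auto
  also have "\<dots> = L * (\<xi> * (norm (y - x))\<^sup>2)"
    by (simp add: power2_eq_square)
  also have "\<dots> \<le> L * (norm (y - x))\<^sup>2"
    using \<xi> \<open>L \<ge> 0\<close> by (intro mult_left_mono mult_left_le_one_le) auto
  finally show ?thesis
    by simp
qed

text \<open>No regularity of g is needed; this is where the envelope gradient
  \<open>(x - \<zeta> lam x) / lam\<close> comes from.\<close>
lemma env_le_quadratic_model:
  fixes g :: "'a::real_inner \<Rightarrow> real"
  assumes \<zeta>_min: "\<And>w z. 1 / (2 * lam) * (norm (w - \<zeta> lam w))\<^sup>2 + g (\<zeta> lam w)
                       \<le> 1 / (2 * lam) * (norm (w - z))\<^sup>2 + g z"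
  shows "env lam g \<zeta> y \<le> env lam g \<zeta> x + ((1 / lam) *\<^sub>R (x - \<zeta> lam x)) \<bullet> (y - x)
    + 1 / (2 * lam) * (norm (y - x))\<^sup>2"
proof -
  have "env lam g \<zeta> y \<le> 1 / (2 * lam) * (norm (y - \<zeta> lam x))\<^sup>2 + g (\<zeta> lam x)"
    unfolding env_def by (rule \<zeta>_min)
  moreover have "(norm (y - \<zeta> lam x))\<^sup>2
      = (norm (x - \<zeta> lam x))\<^sup>2 + 2 * ((x - \<zeta> lam x) \<bullet> (y - x)) + (norm (y - x))\<^sup>2"
    using power2_norm_add[of "x - \<zeta> lam x" "y - x"] by simp
  ultimately show ?thesis
    unfolding env_def by (simp add: algebra_simps add_divide_distrib)
qed

section \<open>Expectations over finite product distributions\<close>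

lemma finite_set_pmf_Pi_pmf:
  "finite A \<Longrightarrow> finite (set_pmf D) \<Longrightarrow> finite (set_pmf (Pi_pmf A d (\<lambda>_. D)))"
  by (auto simp: set_Pi_pmf intro!: finite_PiE_dflt)

lemma expectation_pair_pmf_iterated:
  fixes F :: "'a \<times> 'b \<Rightarrow> real"
  assumes p: "finite (set_pmf p)" and q: "finite (set_pmf q)"
  shows "measure_pmf.expectation (pair_pmf p q) F
       = measure_pmf.expectation p (\<lambda>x. measure_pmf.expectation q (\<lambda>y. F (x, y)))"
proof -
  have "measure_pmf.expectation (pair_pmf p q) F
      = (\<Sum>(x, y)\<in>set_pmf p \<times> set_pmf q. F (x, y) * pmf (pair_pmf p q) (x, y))"
    by (subst integral_measure_pmf_real) (auto simp: p q case_prod_beta)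
  also have "\<dots> = (\<Sum>x\<in>set_pmf p. \<Sum>y\<in>set_pmf q. F (x, y) * (pmf p x * pmf q y))"
    by (simp add: sum.cartesian_product pmf_pair)
  also have "\<dots> = (\<Sum>x\<in>set_pmf p. (\<Sum>y\<in>set_pmf q. F (x, y) * pmf q y) * pmf p x)"
    by (simp add: sum_distrib_left sum_distrib_right mult_ac)
  also have "\<dots> = (\<Sum>x\<in>set_pmf p. measure_pmf.expectation q (\<lambda>y. F (x, y)) * pmf p x)"
    by (subst integral_measure_pmf_real[where A = "set_pmf q"]) (auto simp: q)
  also have "\<dots> = measure_pmf.expectation p (\<lambda>x. measure_pmf.expectation q (\<lambda>y. F (x, y)))"
    by (rule integral_measure_pmf_real[symmetric]) (auto simp: p)
  finally show ?thesis .
qed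

lemma expectation_pair_pmf_iterated':
  fixes F :: "'a \<times> 'b \<Rightarrow> real"
  assumes "finite (set_pmf p)" and "finite (set_pmf q)"
  shows "measure_pmf.expectation (pair_pmf p q) F
       = measure_pmf.expectation q (\<lambda>y. measure_pmf.expectation p (\<lambda>x. F (x, y)))"
  using expectation_pair_pmf_iterated[OF assms(2,1), of "\<lambda>(y, x). F (x, y)"]
  by (subst pair_commute_pmf) (simp add: case_prod_unfold)

lemma expectation_Pi_pmf_union:
  fixes G :: "('i \<Rightarrow> 'b) \<Rightarrow> real"
  assumes "finite A" "finite B" "A \<inter> B = {}" "finite (set_pmf D)"
  shows "measure_pmf.expectation (Pi_pmf (A \<union> B) d (\<lambda>_. D)) G
    = measure_pmf.expectation (Pi_pmf A d (\<lambda>_. D)) (\<lambda>f. measure_pmf.expectation (Pi_pmf B d (\<lambda>_. D))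
        (\<lambda>g. G (\<lambda>x. if x \<in> A then f x else g x)))"
  by (simp add: Pi_pmf_union[OF assms(1-3)] expectation_pair_pmf_iterated finite_set_pmf_Pi_pmf assms
      case_prod_beta cong: if_cong)

text \<open>Since X ignores the block B, the block read through \<open>\<iota>\<close> is an independent sample from
  \<open>Pi_pmf J\<close>.\<close>
lemma expectation_Pi_pmf_fresh_block:
  fixes X :: "('i \<Rightarrow> 'b) \<Rightarrow> 'x" and Y :: "'x \<Rightarrow> ('j \<Rightarrow> 'b) \<Rightarrow> real" and \<iota> :: "'j \<Rightarrow> 'i"
  assumes "finite I" "finite J" "finite (set_pmf D)" "B \<subseteq> I"
    and bij: "bij_betw \<iota> J B" and outside: "\<And>j. j \<notin> J \<Longrightarrow> \<iota> j \<notin> I"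
    and indep: "\<And>\<omega> \<omega>'. (\<And>i. i \<in> I - B \<Longrightarrow> \<omega> i = \<omega>' i) \<Longrightarrow> X \<omega> = X \<omega>'"
  shows "measure_pmf.expectation (Pi_pmf I d (\<lambda>_. D)) (\<lambda>\<omega>. Y (X \<omega>) (\<omega> \<circ> \<iota>))
       = measure_pmf.expectation (Pi_pmf I d (\<lambda>_. D))
           (\<lambda>\<omega>. measure_pmf.expectation (Pi_pmf J d (\<lambda>_. D)) (Y (X \<omega>)))"
proof -
  define A where "A = I - B"
  have I: "I = A \<union> B" "A \<inter> B = {}" "finite A" "finite B"
    using \<open>B \<subseteq> I\<close> \<open>finite I\<close> by (auto simp: A_def intro: finite_subset)
  define X' where "X' f = X (\<lambda>x. if x \<in> A then f x else d)" for f
  have X_merge: "X (\<lambda>x. if x \<in> A then f x else g x) = X' f" for f g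
    unfolding X'_def by (rule indep) (simp add: A_def)
  have merge_comp: "(\<lambda>x. if x \<in> A then f x else g x) \<circ> \<iota> = g \<circ> \<iota>" for f g :: "'i \<Rightarrow> 'b"
  proof
    fix j
    have "\<iota> j \<notin> A"
      using bij_betwE[OF bij] outside[of j] by (cases "j \<in> J") (auto simp: A_def)
    then show "((\<lambda>x. if x \<in> A then f x else g x) \<circ> \<iota>) j = (g \<circ> \<iota>) j"
      by simp
  qed
  have J: "Pi_pmf J d (\<lambda>_. D) = map_pmf (\<lambda>g. g \<circ> \<iota>) (Pi_pmf B d (\<lambda>_. D))"
    using outside \<open>B \<subseteq> I\<close> by (intro Pi_pmf_bij_betw[OF \<open>finite J\<close> bij]) auto
  have "measure_pmf.expectation (Pi_pmf I d (\<lambda>_. D)) (\<lambda>\<omega>. Y (X \<omega>) (\<omega> \<circ> \<iota>))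
      = measure_pmf.expectation (Pi_pmf A d (\<lambda>_. D))
          (\<lambda>f. measure_pmf.expectation (Pi_pmf B d (\<lambda>_. D)) (\<lambda>g. Y (X' f) (g \<circ> \<iota>)))"
    unfolding I(1) by (simp only: expectation_Pi_pmf_union I(2-4) assms(3) X_merge merge_comp)
  also have "\<dots> = measure_pmf.expectation (Pi_pmf A d (\<lambda>_. D))
      (\<lambda>f. measure_pmf.expectation (Pi_pmf J d (\<lambda>_. D)) (Y (X' f)))"
    by (simp add: J)
  also have "\<dots> = measure_pmf.expectation (Pi_pmf I d (\<lambda>_. D))
      (\<lambda>\<omega>. measure_pmf.expectation (Pi_pmf J d (\<lambda>_. D)) (Y (X \<omega>)))"
    unfolding I(1) by (simp only: expectation_Pi_pmf_union I(2-4) assms(3) X_merge) simp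
  finally show ?thesis .
qed

lemma expectation_uniform_norm_add_centered:
  fixes a :: "nat \<Rightarrow> 'a::real_inner" and s :: 'a
  assumes "n > 0"
  defines "abar \<equiv> (1 / real n) *\<^sub>R (\<Sum>j=1..n. a j)"
  shows "measure_pmf.expectation (pmf_of_set {1..n}) (\<lambda>j. (norm (s + (a j - abar)))\<^sup>2)
    = (norm s)\<^sup>2 + (\<Sum>j=1..n. (norm (a j - abar))\<^sup>2) / real n"
proof -
  have centered: "(\<Sum>j=1..n. a j - abar) = 0"
    using \<open>n > 0\<close> by (simp add: abar_def sum_subtractf sum_constant_scaleR)
  have "measure_pmf.expectation (pmf_of_set {1..n}) (\<lambda>j. (norm (s + (a j - abar)))\<^sup>2)
      = (\<Sum>j=1..n. (norm s)\<^sup>2 + 2 * (s \<bullet> (a j - abar)) + (norm (a j - abar))\<^sup>2) / real n"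
    using \<open>n > 0\<close> by (simp add: integral_pmf_of_set power2_norm_add)
  also have "\<dots> = (real n * (norm s)\<^sup>2 + 2 * (s \<bullet> (\<Sum>j=1..n. a j - abar))
      + (\<Sum>j=1..n. (norm (a j - abar))\<^sup>2)) / real n"
    by (simp add: sum.distrib inner_sum_right sum_distrib_left)
  also have "\<dots> = (norm s)\<^sup>2 + (\<Sum>j=1..n. (norm (a j - abar))\<^sup>2) / real n"
    unfolding centered using \<open>n > 0\<close> by (simp add: add_divide_distrib)
  finally show ?thesis .
qed

lemma expectation_norm_sum_centered_samples:
  fixes a :: "nat \<Rightarrow> 'a::real_inner"
  assumes "n > 0"
  defines "abar \<equiv> (1 / real n) *\<^sub>R (\<Sum>j=1..n. a j)"
  shows "measure_pmf.expectation (Pi_pmf {1..b} d (\<lambda>_. pmf_of_set {1..n}))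
           (\<lambda>u. (norm (\<Sum>i=1..b. a (u i) - abar))\<^sup>2)
         = real b * ((\<Sum>j=1..n. (norm (a j - abar))\<^sup>2) / real n)"
proof (induction b)
  case (Suc b)
  define U where "U = pmf_of_set {1..n}"
  define P where "P = Pi_pmf {1..b} d (\<lambda>_. U)"
  define \<Sigma> where "\<Sigma> f = (\<Sum>i=1..b. a (f i) - abar)" for f :: "nat \<Rightarrow> nat"
  have fin: "finite (set_pmf U)" "finite (set_pmf P)"
    using \<open>n > 0\<close> by (simp_all add: U_def P_def finite_set_pmf_Pi_pmf)
  have "{1..Suc b} = insert (Suc b) {1..b}"
    by auto
  then have Pi_Suc: "Pi_pmf {1..Suc b} d (\<lambda>_. U) = map_pmf (\<lambda>(y, f). f(Suc b := y)) (pair_pmf U P)"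
    unfolding P_def by (simp add: Pi_pmf_insert)
  have sum_upd: "(\<Sum>i=1..Suc b. a ((f(Suc b := y)) i) - abar) = \<Sigma> f + (a y - abar)" for f y
  proof -
    have "(\<Sum>i=1..b. a ((f(Suc b := y)) i) - abar) = \<Sigma> f"
      unfolding \<Sigma>_def by (intro sum.cong) auto
    then show ?thesis
      by simp
  qed
  have "measure_pmf.expectation (Pi_pmf {1..Suc b} d (\<lambda>_. U)) (\<lambda>u. (norm (\<Sum>i=1..Suc b. a (u i) - abar))\<^sup>2)
      = measure_pmf.expectation (pair_pmf U P) (\<lambda>z. (norm (\<Sigma> (snd z) + (a (fst z) - abar)))\<^sup>2)"
    unfolding Pi_Suc by (simp add: case_prod_beta sum_upd \<Sigma>_def del: One_nat_def)
  also have "\<dots> = measure_pmf.expectation P (\<lambda>f. measure_pmf.expectation U (\<lambda>y. (norm (\<Sigma> f + (a y - abar)))\<^sup>2))"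
    by (subst expectation_pair_pmf_iterated'[OF fin]) simp
  also have "\<dots> = measure_pmf.expectation P (\<lambda>f. (norm (\<Sigma> f))\<^sup>2 + (\<Sum>j=1..n. (norm (a j - abar))\<^sup>2) / real n)"
    unfolding U_def abar_def by (simp only: expectation_uniform_norm_add_centered[OF \<open>n > 0\<close>])
  also have "\<dots> = measure_pmf.expectation P (\<lambda>f. (norm (\<Sigma> f))\<^sup>2) + (\<Sum>j=1..n. (norm (a j - abar))\<^sup>2) / real n"
    using fin by (simp add: integrable_measure_pmf_finite)
  finally show ?case
    using Suc.IH by (simp add: U_def P_def \<Sigma>_def algebra_simps add_divide_distrib)
qed simp

lemma sum_norm_centered_le:
  fixes a :: "nat \<Rightarrow> 'a::real_inner"
  assumes "n > 0"
  defines "abar \<equiv> (1 / real n) *\<^sub>R (\<Sum>j=1..n. a j)"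
  shows "(\<Sum>j=1..n. (norm (a j - abar))\<^sup>2) \<le> (\<Sum>j=1..n. (norm (a j))\<^sup>2)"
proof -
  have sum_a: "(\<Sum>j=1..n. a j) = real n *\<^sub>R abar"
    using assms by (simp add: abar_def)
  have "(\<Sum>j=1..n. (norm (a j - abar))\<^sup>2)
      = (\<Sum>j=1..n. (norm (a j))\<^sup>2) - 2 * ((\<Sum>j=1..n. a j) \<bullet> abar) + real n * (norm abar)\<^sup>2"
    by (simp add: power2_norm_diff sum.distrib sum_subtractf inner_sum_left sum_distrib_left)
  also have "\<dots> = (\<Sum>j=1..n. (norm (a j))\<^sup>2) - real n * (norm abar)\<^sup>2"
    unfolding sum_a by (simp add: power2_norm_eq_inner)
  finally show ?thesis
    by simp
qed

section \<open>One step of VRSPA\<close>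

locale vrspa_problem = proper_closed_convex h
  for h :: "'a::euclidean_space \<Rightarrow> ereal" +
  fixes n :: nat and L :: real and f :: "nat \<Rightarrow> 'a \<Rightarrow> real" and df :: "nat \<Rightarrow> 'a \<Rightarrow> 'a"
    and g :: "'a \<Rightarrow> real" and \<zeta> :: "real \<Rightarrow> 'a \<Rightarrow> 'a" and lam :: real
  assumes n_pos: "n > 0"
    and f_grad: "\<And>j x. j \<in> {1..n} \<Longrightarrow> (f j has_derivative (\<lambda>v. df j x \<bullet> v)) (at x)"
    and f_smooth: "\<And>j x y. j \<in> {1..n} \<Longrightarrow> norm (df j x - df j y) \<le> L * norm (x - y)"
    and \<zeta>_min: "\<And>w x. 1 / (2 * lam) * (norm (w - \<zeta> lam w))\<^sup>2 + g (\<zeta> lam w)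
                     \<le> 1 / (2 * lam) * (norm (w - x))\<^sup>2 + g x"
    and lam_pos: "lam > 0"
begin

definition F :: "'a \<Rightarrow> real" where
  "F w = (1 / real n) * (\<Sum>j=1..n. f j w) + env lam g \<zeta> w"

definition grad_F :: "'a \<Rightarrow> 'a" where
  "grad_F w = full_grad n df w + (1 / lam) *\<^sub>R (w - \<zeta> lam w)"

text \<open>Only meaningful where h is finite, since \<open>real_of_ereal \<infinity> = 0\<close>.\<close>
definition Phi :: "'a \<Rightarrow> real" where
  "Phi w = F w + real_of_ereal (h w)"

definition L_lam :: real where
  "L_lam = L + 1 / lam"

definition stepsize :: real where
  "stepsize = 1 / (6 * L_lam)"

definition grad_mapping :: "'a \<Rightarrow> 'a" where
  "grad_mapping w = (1 / stepsize) *\<^sub>R (w - prox stepsize h (w - stepsize *\<^sub>R grad_F w))"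

definition grad_est :: "nat \<Rightarrow> 'a \<Rightarrow> 'a \<Rightarrow> (nat \<Rightarrow> nat) \<Rightarrow> 'a" where
  "grad_est b w wt u = (1 / real b) *\<^sub>R (\<Sum>i=1..b. df (u i) w - df (u i) wt) + full_grad n df wt
     + (1 / lam) *\<^sub>R (w - \<zeta> lam w)"

definition vrspa_step :: "nat \<Rightarrow> 'a \<Rightarrow> 'a \<Rightarrow> (nat \<Rightarrow> nat) \<Rightarrow> 'a" where
  "vrspa_step b w wt u = prox stepsize h (w - stepsize *\<^sub>R grad_est b w wt u)"

lemma L_nonneg: "L \<ge> 0"
proof -
  obtain e :: 'a where "e \<in> Basis"
    using nonempty_Basis by blast
  then have "norm (df 1 e - df 1 0) \<le> L"
    using f_smooth[of 1 e 0] n_pos by simp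
  then show ?thesis
    by (meson norm_ge_zero order_trans)
qed

lemma L_lam_pos: "L_lam > 0"
  using L_nonneg lam_pos by (simp add: L_lam_def add_nonneg_pos)

lemma stepsize_pos: "stepsize > 0"
  using L_lam_pos by (simp add: stepsize_def)

lemma stepsize_L_lam: "stepsize * L_lam = 1 / 6"
  using L_lam_pos by (simp add: stepsize_def)

lemma stepsize_L_le: "stepsize * L \<le> 1 / 6"
proof -
  have "stepsize * L \<le> stepsize * L_lam"
    using stepsize_pos lam_pos by (intro mult_left_mono) (auto simp: L_lam_def)
  then show ?thesis
    using stepsize_L_lam by simp
qed

lemma F_le_quadratic_model: "F y \<le> F x + grad_F x \<bullet> (y - x) + L_lam * (norm (y - x))\<^sup>2"
proof -
  have "(\<Sum>j=1..n. f j y) \<le> (\<Sum>j=1..n. f j x + df j x \<bullet> (y - x) + L * (norm (y - x))\<^sup>2)"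
    using lipschitz_gradient_upper_bound[OF f_grad f_smooth L_nonneg] by (intro sum_mono) auto
  also have "\<dots> = (\<Sum>j=1..n. f j x) + (\<Sum>j=1..n. df j x) \<bullet> (y - x) + real n * (L * (norm (y - x))\<^sup>2)"
    by (simp add: sum.distrib inner_sum_left)
  finally have "(1 / real n) * (\<Sum>j=1..n. f j y)
      \<le> (1 / real n) * (\<Sum>j=1..n. f j x) + full_grad n df x \<bullet> (y - x) + L * (norm (y - x))\<^sup>2"
    using n_pos by (simp add: full_grad_def field_simps)
  moreover have "env lam g \<zeta> y \<le> env lam g \<zeta> x + ((1 / lam) *\<^sub>R (x - \<zeta> lam x)) \<bullet> (y - x)
      + 1 / lam * (norm (y - x))\<^sup>2"
  proof -
    have "1 / (2 * lam) * (norm (y - x))\<^sup>2 \<le> 1 / lam * (norm (y - x))\<^sup>2"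
      using lam_pos by (intro mult_right_mono) (auto simp: field_simps)
    with env_le_quadratic_model[where g = g and \<zeta> = \<zeta> and lam = lam, OF \<zeta>_min, of y x]
    show ?thesis
      by linarith
  qed
  ultimately show ?thesis
    by (simp add: F_def grad_F_def L_lam_def inner_add_left algebra_simps)
qed

lemma vrspa_step_descent:
  fixes b :: nat and w wt :: 'a and u :: "nat \<Rightarrow> nat"
  assumes "h w < \<infinity>" and "a > 0" and "c \<ge> 0" and c_small: "c * (1 + a) \<le> 1 / (4 * stepsize)"
  defines "y \<equiv> vrspa_step b w wt u" and "e \<equiv> grad_est b w wt u - grad_F w"
  shows "Phi y + c * (norm (y - wt))\<^sup>2
    \<le> Phi w + c * (1 + 1 / a) * (norm (w - wt))\<^sup>2 + 4 * stepsize / 3 * (norm e)\<^sup>2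
       - stepsize / 6 * (norm (grad_mapping w))\<^sup>2"
proof -
  define D where "D = (norm (y - w))\<^sup>2 / stepsize"
  define E where "E = stepsize * (norm e)\<^sup>2"
  have y: "y = prox stepsize h (w - stepsize *\<^sub>R grad_est b w wt u)"
    by (simp add: y_def vrspa_step_def)
  have "Phi y \<le> Phi w + E - (3 / (4 * stepsize) - L_lam) * (norm (y - w))\<^sup>2"
    using prox_grad_step_descent[OF stepsize_pos \<open>h w < \<infinity>\<close> y F_le_quadratic_model]
    by (simp add: Phi_def E_def e_def algebra_simps)
  also have "(3 / (4 * stepsize) - L_lam) * (norm (y - w))\<^sup>2 = 7 / 12 * D"
    using stepsize_L_lam stepsize_pos by (simp add: D_def field_simps)
  finally have Phi_step: "Phi y \<le> Phi w + E - 7 / 12 * D" .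
  have "c * (norm (y - wt))\<^sup>2 \<le> c * ((1 + a) * (norm (y - w))\<^sup>2 + (1 + 1 / a) * (norm (w - wt))\<^sup>2)"
    using power2_norm_add_le_weighted[OF \<open>a > 0\<close>, of "y - w" "w - wt"] \<open>c \<ge> 0\<close>
    by (intro mult_left_mono) auto
  also have "c * (1 + a) * (norm (y - w))\<^sup>2 \<le> D / 4"
    using mult_right_mono[OF c_small, of "(norm (y - w))\<^sup>2"] by (simp add: D_def)
  then have "c * ((1 + a) * (norm (y - w))\<^sup>2 + (1 + 1 / a) * (norm (w - wt))\<^sup>2)
      \<le> D / 4 + c * (1 + 1 / a) * (norm (w - wt))\<^sup>2"
    by (simp add: algebra_simps)
  finally have dist_step: "c * (norm (y - wt))\<^sup>2 \<le> D / 4 + c * (1 + 1 / a) * (norm (w - wt))\<^sup>2" .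
  have "norm (grad_mapping w) \<le> norm (w - y) / stepsize + norm e"
    unfolding grad_mapping_def y e_def by (rule gradient_mapping_perturbation[OF stepsize_pos])
  then have "(norm (grad_mapping w))\<^sup>2 \<le> (norm (w - y) / stepsize + norm e)\<^sup>2"
    by (intro power_mono) auto
  also have "\<dots> \<le> 2 * (norm (w - y) / stepsize)\<^sup>2 + 2 * (norm e)\<^sup>2"
    using zero_le_power2[of "norm (w - y) / stepsize - norm e"] by (simp add: power2_sum power2_diff)
  finally have "stepsize / 6 * (norm (grad_mapping w))\<^sup>2 \<le> D / 3 + E / 3"
    using stepsize_pos mult_left_mono[of _ _ "stepsize / 6"]
    by (simp add: D_def E_def norm_minus_commute field_simps power2_eq_square)
  with Phi_step dist_step show ?thesis
    by (simp add: E_def)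
qed

lemma grad_est_error:
  assumes "b > 0"
  shows "grad_est b w wt u - grad_F w
    = (1 / real b) *\<^sub>R (\<Sum>i=1..b. (df (u i) w - df (u i) wt)
        - (1 / real n) *\<^sub>R (\<Sum>j=1..n. df j w - df j wt))"
proof -
  have "(1 / real n) *\<^sub>R (\<Sum>j=1..n. df j w - df j wt) = full_grad n df w - full_grad n df wt"
    by (simp add: full_grad_def sum_subtractf scaleR_diff_right)
  moreover have "(1 / real b) *\<^sub>R (\<Sum>i=1..b. (df (u i) w - df (u i) wt) - c)
      = (1 / real b) *\<^sub>R (\<Sum>i=1..b. df (u i) w - df (u i) wt) - c" for c
    using assms by (simp add: sum_subtractf scaleR_diff_right sum_constant_scaleR)
  ultimately show ?thesis
    by (simp add: grad_est_def grad_F_def)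
qed

lemma expectation_grad_est_error:
  assumes "b > 0"
  shows "measure_pmf.expectation (Pi_pmf {1..b} d (\<lambda>_. pmf_of_set {1..n}))
      (\<lambda>u. (norm (grad_est b w wt u - grad_F w))\<^sup>2) \<le> L\<^sup>2 / real b * (norm (w - wt))\<^sup>2"
proof -
  define a where "a j = df j w - df j wt" for j
  define abar where "abar = (1 / real n) *\<^sub>R (\<Sum>j=1..n. a j)"
  have "(norm (grad_est b w wt u - grad_F w))\<^sup>2 = (1 / real b)\<^sup>2 * (norm (\<Sum>i=1..b. a (u i) - abar))\<^sup>2"
    for u by (simp add: grad_est_error[OF assms] a_def abar_def power_divide)
  then have "measure_pmf.expectation (Pi_pmf {1..b} d (\<lambda>_. pmf_of_set {1..n}))
      (\<lambda>u. (norm (grad_est b w wt u - grad_F w))\<^sup>2)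
    = (1 / real b)\<^sup>2 * measure_pmf.expectation (Pi_pmf {1..b} d (\<lambda>_. pmf_of_set {1..n}))
      (\<lambda>u. (norm (\<Sum>i=1..b. a (u i) - abar))\<^sup>2)"
    by simp
  also have "\<dots> = (\<Sum>j=1..n. (norm (a j - abar))\<^sup>2) / real n / real b"
    unfolding abar_def using assms
    by (subst expectation_norm_sum_centered_samples[OF n_pos]) (simp add: power2_eq_square)
  also have "\<dots> \<le> (\<Sum>j=1..n. (norm (a j))\<^sup>2) / real n / real b"
    using sum_norm_centered_le[OF n_pos, of a] assms n_pos
    by (simp add: abar_def divide_right_mono)
  also have "(\<Sum>j=1..n. (norm (a j))\<^sup>2) \<le> (\<Sum>j=1..n. L\<^sup>2 * (norm (w - wt))\<^sup>2)"
  proof (rule sum_mono)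
    fix j
    assume "j \<in> {1..n}"
    then have "norm (a j) \<le> L * norm (w - wt)"
      using f_smooth by (simp add: a_def)
    then show "(norm (a j))\<^sup>2 \<le> L\<^sup>2 * (norm (w - wt))\<^sup>2"
      by (metis norm_ge_zero power_mono power_mult_distrib)
  qed
  then have "(\<Sum>j=1..n. (norm (a j))\<^sup>2) / real n / real b
      \<le> (\<Sum>j=1..n. L\<^sup>2 * (norm (w - wt))\<^sup>2) / real n / real b"
    by (intro divide_right_mono) auto
  also have "\<dots> = L\<^sup>2 / real b * (norm (w - wt))\<^sup>2"
    using n_pos by simp
  finally show ?thesis .
qed

lemma minimizer_Phi:
  assumes wstar: "\<And>w. ereal (F wstar) + h wstar \<le> ereal (F w) + h w"
  shows "h wstar < \<infinity>" and "h w < \<infinity> \<Longrightarrow> Phi wstar \<le> Phi w"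
proof -
  obtain x0 c where "h x0 = ereal c"
    by (rule finite_somewhere)
  then show fin: "h wstar < \<infinity>"
    using wstar[of x0] by (cases "h wstar") auto
  show "Phi wstar \<le> Phi w" if w_fin: "h w < \<infinity>"
  proof -
    obtain a b where "h wstar = ereal a" "h w = ereal b"
      using fin w_fin greater_minf[of wstar] greater_minf[of w] by (cases "h wstar"; cases "h w") auto
    with wstar[of w] show ?thesis
      by (simp add: Phi_def)
  qed
qed

section \<open>A run of VRSPA\<close>

lemma vrspa_inner_Suc:
  "vrspa_inner n b df \<zeta> h lam stepsize \<omega> wt k (Suc t)
    = vrspa_step b (vrspa_inner n b df \<zeta> h lam stepsize \<omega> wt k t) wt (\<lambda>i. \<omega> (k, Suc t, i))"
  by (simp add: vrspa_step_def grad_est_def Let_def)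

lemma vrspa_inner_finite: "h wt < \<infinity> \<Longrightarrow> h (vrspa_inner n b df \<zeta> h lam stepsize \<omega> wt k t) < \<infinity>"
  by (cases t) (simp_all only: vrspa_inner_Suc vrspa_step_def prox_finite[OF stepsize_pos] vrspa_inner.simps(1))

lemma vrspa_inner_cong:
  assumes "\<And>s i. 1 \<le> s \<Longrightarrow> s \<le> t \<Longrightarrow> 1 \<le> i \<Longrightarrow> i \<le> b \<Longrightarrow> \<omega> (k, s, i) = \<omega>' (k, s, i)"
  shows "vrspa_inner n b df \<zeta> h lam stepsize \<omega> wt k t = vrspa_inner n b df \<zeta> h lam stepsize \<omega>' wt k t"
  using assms
proof (induction t)
  case (Suc t)
  then have "vrspa_inner n b df \<zeta> h lam stepsize \<omega> wt k t = vrspa_inner n b df \<zeta> h lam stepsize \<omega>' wt k t"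
    by simp
  moreover have "grad_est b w wt (\<lambda>i. \<omega> (k, Suc t, i)) = grad_est b w wt (\<lambda>i. \<omega>' (k, Suc t, i))" for w
    unfolding grad_est_def using Suc.prems by (intro arg_cong2[where f = "(+)"] refl sum.cong) auto
  ultimately show ?case
    by (simp only: vrspa_inner_Suc vrspa_step_def)
qed simp

end

locale vrspa_run = vrspa_problem +
  fixes S m :: nat and w1 :: 'a
  assumes S_pos: "S > 0" and m_pos: "m > 0" and w1_finite: "h w1 < \<infinity>"
begin

definition batch :: nat where
  "batch = m\<^sup>2"

definition samples :: "(nat \<times> nat \<times> nat \<Rightarrow> nat) pmf" where
  "samples = sample_pmf n S m batch"

definition snapshot :: "(nat \<times> nat \<times> nat \<Rightarrow> nat) \<Rightarrow> nat \<Rightarrow> 'a" where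
  "snapshot \<omega> k = vrspa_snap n m batch df \<zeta> h lam stepsize \<omega> w1 k"

definition iterate :: "(nat \<times> nat \<times> nat \<Rightarrow> nat) \<Rightarrow> nat \<Rightarrow> nat \<Rightarrow> 'a" where
  "iterate \<omega> k t = vrspa_iter n m batch df \<zeta> h lam stepsize \<omega> w1 k t"

lemma batch_pos: "batch > 0"
  using m_pos by (simp add: batch_def)

lemma iterate_1: "iterate \<omega> k 1 = snapshot \<omega> k"
  by (simp add: iterate_def vrspa_iter_def snapshot_def)

lemma iterate_Suc:
  "1 \<le> t \<Longrightarrow> iterate \<omega> k (Suc t) = vrspa_step batch (iterate \<omega> k t) (snapshot \<omega> k) (\<lambda>i. \<omega> (k, t, i))"
  by (cases t) (simp_all add: iterate_def vrspa_iter_def snapshot_def vrspa_inner_Suc del: vrspa_inner.simps)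

lemma iterate_last: "1 \<le> k \<Longrightarrow> iterate \<omega> k (Suc m) = snapshot \<omega> (Suc k)"
  by (cases k) (simp_all add: iterate_def vrspa_iter_def snapshot_def)

lemma snapshot_Suc_Suc:
  "snapshot \<omega> (Suc (Suc k)) = vrspa_inner n batch df \<zeta> h lam stepsize \<omega> (snapshot \<omega> (Suc k)) (Suc k) m"
  by (simp add: snapshot_def)

lemma snapshot_finite: "h (snapshot \<omega> k) < \<infinity>"
proof (induction k)
  case (Suc k)
  show ?case
  proof (cases k)
    case (Suc j)
    show ?thesis
      unfolding \<open>k = Suc j\<close> snapshot_Suc_Suc
      using Suc.IH \<open>k = Suc j\<close> by (intro vrspa_inner_finite) simp
  qed (use w1_finite in \<open>simp add: snapshot_def\<close>)
qed (use w1_finite in \<open>simp add: snapshot_def\<close>)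

lemma iterate_finite: "h (iterate \<omega> k t) < \<infinity>"
  using vrspa_inner_finite[OF snapshot_finite]
  by (simp add: iterate_def vrspa_iter_def snapshot_def)

lemma snapshot_cong:
  assumes "\<And>k' s i. 1 \<le> k' \<Longrightarrow> k' < k \<Longrightarrow> 1 \<le> s \<Longrightarrow> s \<le> m \<Longrightarrow> 1 \<le> i \<Longrightarrow> i \<le> batch
    \<Longrightarrow> \<omega> (k', s, i) = \<omega>' (k', s, i)"
  shows "snapshot \<omega> k = snapshot \<omega>' k"
  using assms
proof (induction k)
  case (Suc k)
  show ?case
  proof (cases k)
    case (Suc j)
    have "snapshot \<omega> k = snapshot \<omega>' k"
      using Suc.IH Suc.prems by simp
    moreover have "vrspa_inner n batch df \<zeta> h lam stepsize \<omega> (snapshot \<omega>' k) k m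
        = vrspa_inner n batch df \<zeta> h lam stepsize \<omega>' (snapshot \<omega>' k) k m"
      using Suc.prems \<open>k = Suc j\<close> by (intro vrspa_inner_cong) auto
    ultimately show ?thesis
      using \<open>k = Suc j\<close> by (simp add: snapshot_Suc_Suc)
  qed (simp add: snapshot_def)
qed (simp add: snapshot_def)

definition sample_indices :: "(nat \<times> nat \<times> nat) set" where
  "sample_indices = {1..S} \<times> {1..m} \<times> {1..batch}"

lemma samples_eq: "samples = Pi_pmf sample_indices 0 (\<lambda>_. pmf_of_set {1..n})"
  by (simp add: samples_def sample_pmf_def sample_indices_def)

lemma finite_samples: "finite (set_pmf samples)"
  unfolding samples_eq using n_pos by (intro finite_set_pmf_Pi_pmf) (auto simp: sample_indices_def)

lemma integrable_samples: "integrable (measure_pmf samples) (X :: _ \<Rightarrow> real)"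
  by (rule integrable_measure_pmf_finite[OF finite_samples])

lemma iterate_indep_of_step_samples:
  assumes "k \<in> {1..S}" "t \<in> {1..m}"
    and same: "\<And>i. i \<in> sample_indices - (\<lambda>i. (k, t, i)) ` {1..batch} \<Longrightarrow> \<omega> i = \<omega>' i"
  shows "snapshot \<omega> k = snapshot \<omega>' k" and "iterate \<omega> k t = iterate \<omega>' k t"
proof -
  show "snapshot \<omega> k = snapshot \<omega>' k"
    using assms(1) by (intro snapshot_cong same) (auto simp: sample_indices_def)
  moreover have "vrspa_inner n batch df \<zeta> h lam stepsize \<omega> (snapshot \<omega>' k) k (t - 1)
      = vrspa_inner n batch df \<zeta> h lam stepsize \<omega>' (snapshot \<omega>' k) k (t - 1)"
    using assms(1,2) by (intro vrspa_inner_cong same) (auto simp: sample_indices_def)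
  ultimately show "iterate \<omega> k t = iterate \<omega>' k t"
    by (simp add: iterate_def vrspa_iter_def snapshot_def)
qed

lemma expectation_grad_est_error_iterate:
  assumes "k \<in> {1..S}" "t \<in> {1..m}"
  shows "measure_pmf.expectation samples
      (\<lambda>\<omega>. (norm (grad_est batch (iterate \<omega> k t) (snapshot \<omega> k) (\<lambda>i. \<omega> (k, t, i)) - grad_F (iterate \<omega> k t)))\<^sup>2)
    \<le> measure_pmf.expectation samples (\<lambda>\<omega>. L\<^sup>2 / real batch * (norm (iterate \<omega> k t - snapshot \<omega> k))\<^sup>2)"
proof -
  define Y where "Y = (\<lambda>(w, wt) u. (norm (grad_est batch w wt u - grad_F w))\<^sup>2)"
  have "measure_pmf.expectation samples
      (\<lambda>\<omega>. Y (iterate \<omega> k t, snapshot \<omega> k) (\<omega> \<circ> (\<lambda>i. (k, t, i))))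
    = measure_pmf.expectation samples (\<lambda>\<omega>. measure_pmf.expectation
        (Pi_pmf {1..batch} 0 (\<lambda>_. pmf_of_set {1..n})) (Y (iterate \<omega> k t, snapshot \<omega> k)))"
    unfolding samples_eq
  proof (rule expectation_Pi_pmf_fresh_block)
    show "finite sample_indices" "finite {1..batch}" "finite (set_pmf (pmf_of_set {1..n}))"
      using n_pos by (simp_all add: sample_indices_def)
    show "(\<lambda>i. (k, t, i)) ` {1..batch} \<subseteq> sample_indices"
      using assms by (auto simp: sample_indices_def)
    show "bij_betw (\<lambda>i. (k, t, i)) {1..batch} ((\<lambda>i. (k, t, i)) ` {1..batch})"
      by (rule bij_betw_imageI) (auto simp: inj_on_def)
    show "(k, t, j) \<notin> sample_indices" if "j \<notin> {1..batch}" for j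
      using that by (simp add: sample_indices_def)
    show "(iterate \<omega> k t, snapshot \<omega> k) = (iterate \<omega>' k t, snapshot \<omega>' k)"
      if "\<And>i. i \<in> sample_indices - (\<lambda>i. (k, t, i)) ` {1..batch} \<Longrightarrow> \<omega> i = \<omega>' i" for \<omega> \<omega>'
      using iterate_indep_of_step_samples[OF assms that] by simp
  qed
  then have "measure_pmf.expectation samples
      (\<lambda>\<omega>. (norm (grad_est batch (iterate \<omega> k t) (snapshot \<omega> k) (\<lambda>i. \<omega> (k, t, i)) - grad_F (iterate \<omega> k t)))\<^sup>2)
    = measure_pmf.expectation samples (\<lambda>\<omega>. measure_pmf.expectation
        (Pi_pmf {1..batch} 0 (\<lambda>_. pmf_of_set {1..n}))
        (\<lambda>u. (norm (grad_est batch (iterate \<omega> k t) (snapshot \<omega> k) u - grad_F (iterate \<omega> k t)))\<^sup>2))"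
    by (simp add: Y_def o_def)
  also have "\<dots> \<le> measure_pmf.expectation samples
      (\<lambda>\<omega>. L\<^sup>2 / real batch * (norm (iterate \<omega> k t - snapshot \<omega> k))\<^sup>2)"
    by (rule integral_mono[OF integrable_samples integrable_samples expectation_grad_est_error[OF batch_pos]])
  finally show ?thesis .
qed

definition noise_coeff :: real where
  "noise_coeff = 4 * stepsize / 3 * (L\<^sup>2 / real batch)"

lemma noise_coeff_nonneg: "noise_coeff \<ge> 0"
  using stepsize_pos by (simp add: noise_coeff_def)

lemma expected_step_descent:
  assumes k: "k \<in> {1..S}" and t: "t \<in> {1..m}"
    and "c \<ge> 0" and c_small: "c * (1 + real m) \<le> 1 / (4 * stepsize)"
  shows "measure_pmf.expectation samples
      (\<lambda>\<omega>. Phi (iterate \<omega> k (Suc t)) + c * (norm (iterate \<omega> k (Suc t) - snapshot \<omega> k))\<^sup>2)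
    \<le> measure_pmf.expectation samples
      (\<lambda>\<omega>. Phi (iterate \<omega> k t) + (c * (1 + 1 / real m) + noise_coeff) * (norm (iterate \<omega> k t - snapshot \<omega> k))\<^sup>2)
      - stepsize / 6 * measure_pmf.expectation samples (\<lambda>\<omega>. (norm (grad_mapping (iterate \<omega> k t)))\<^sup>2)"
proof -
  define D where "D \<omega> = (norm (iterate \<omega> k t - snapshot \<omega> k))\<^sup>2" for \<omega>
  define Err where "Err \<omega> = (norm (grad_est batch (iterate \<omega> k t) (snapshot \<omega> k) (\<lambda>i. \<omega> (k, t, i))
      - grad_F (iterate \<omega> k t)))\<^sup>2" for \<omega>
  define G where "G \<omega> = (norm (grad_mapping (iterate \<omega> k t)))\<^sup>2" for \<omega>
  define R where "R \<omega> = Phi (iterate \<omega> k t) + c * (1 + 1 / real m) * D \<omega>" for \<omega>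
  have t1: "1 \<le> t"
    using t by simp
  have "Phi (iterate \<omega> k (Suc t)) + c * (norm (iterate \<omega> k (Suc t) - snapshot \<omega> k))\<^sup>2
      \<le> R \<omega> + 4 * stepsize / 3 * Err \<omega> - stepsize / 6 * G \<omega>" for \<omega>
    unfolding iterate_Suc[OF t1] R_def D_def Err_def G_def
    using vrspa_step_descent[OF iterate_finite _ \<open>c \<ge> 0\<close>, of "real m"] c_small m_pos by simp
  then have "measure_pmf.expectation samples
      (\<lambda>\<omega>. Phi (iterate \<omega> k (Suc t)) + c * (norm (iterate \<omega> k (Suc t) - snapshot \<omega> k))\<^sup>2)
    \<le> measure_pmf.expectation samples (\<lambda>\<omega>. R \<omega> + 4 * stepsize / 3 * Err \<omega> - stepsize / 6 * G \<omega>)"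
    by (intro integral_mono integrable_samples)
  also have "\<dots> = measure_pmf.expectation samples R + 4 * stepsize / 3 * measure_pmf.expectation samples Err
      - stepsize / 6 * measure_pmf.expectation samples G"
    by (simp add: integrable_samples)
  also have "measure_pmf.expectation samples Err \<le> L\<^sup>2 / real batch * measure_pmf.expectation samples D"
    using expectation_grad_est_error_iterate[OF k t] by (simp add: Err_def[abs_def] D_def[abs_def])
  also have "measure_pmf.expectation samples R + 4 * stepsize / 3 * (L\<^sup>2 / real batch * measure_pmf.expectation samples D)
      = measure_pmf.expectation samples
          (\<lambda>\<omega>. Phi (iterate \<omega> k t) + (c * (1 + 1 / real m) + noise_coeff) * D \<omega>)"
    by (simp add: R_def[abs_def] noise_coeff_def integrable_samples algebra_simps)
  finally show ?thesis
    using stepsize_pos by (simp add: D_def G_def mult_left_mono)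
qed

text \<open>The weights solve \<open>c (m + 1) = 0\<close>, \<open>c t = c (t + 1) * (1 + 1 / m) + noise_coeff\<close>.\<close>
definition lyap_coeff :: "nat \<Rightarrow> real" where
  "lyap_coeff t = noise_coeff * (\<Sum>i<Suc m - t. (1 + 1 / real m) ^ i)"

lemma lyap_coeff_nonneg: "lyap_coeff t \<ge> 0"
  unfolding lyap_coeff_def using noise_coeff_nonneg by (intro mult_nonneg_nonneg sum_nonneg) auto

lemma lyap_coeff_last: "lyap_coeff (Suc m) = 0"
  by (simp add: lyap_coeff_def)

lemma lyap_coeff_Suc:
  assumes "t \<in> {1..m}"
  shows "lyap_coeff (Suc t) * (1 + 1 / real m) + noise_coeff = lyap_coeff t"
proof -
  have "Suc m - t = Suc (m - t)" "Suc m - Suc t = m - t"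
    using assms by auto
  moreover have "(\<Sum>i<Suc N. r ^ i) = 1 + r * (\<Sum>i<N. r ^ i)" for N and r :: real
    by (simp only: sum.lessThan_Suc_shift) (simp add: sum_distrib_left)
  ultimately show ?thesis
    unfolding lyap_coeff_def by (simp add: algebra_simps)
qed

lemma lyap_coeff_small:
  assumes "t \<in> {1..m}"
  shows "lyap_coeff (Suc t) * (1 + real m) \<le> 1 / (4 * stepsize)"
proof -
  have "(\<Sum>i<Suc m - Suc t. (1 + 1 / real m) ^ i) \<le> (\<Sum>i<Suc m - Suc t. 3)"
    using m_pos assms by (intro sum_mono one_plus_inverse_power_le_3) auto
  also have "\<dots> \<le> 3 * real m"
    by simp
  finally have "lyap_coeff (Suc t) \<le> noise_coeff * (3 * real m)"
    unfolding lyap_coeff_def using noise_coeff_nonneg by (rule mult_left_mono)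
  then have "lyap_coeff (Suc t) * (1 + real m) \<le> noise_coeff * (3 * real m) * (2 * real m)"
    by (rule mult_mono) (use m_pos noise_coeff_nonneg in auto)
  also have "\<dots> = 8 * stepsize * L\<^sup>2"
    using m_pos by (simp add: noise_coeff_def batch_def power2_eq_square)
  also have "\<dots> \<le> 1 / (4 * stepsize)"
  proof -
    have "(stepsize * L)\<^sup>2 \<le> (1 / 6)\<^sup>2"
      using stepsize_pos L_nonneg stepsize_L_le by (intro power_mono) auto
    then show ?thesis
      using stepsize_pos by (simp add: field_simps power2_eq_square)
  qed
  finally show ?thesis .
qed

definition expected_gm_sq :: "nat \<Rightarrow> nat \<Rightarrow> real" where
  "expected_gm_sq k t = measure_pmf.expectation samples (\<lambda>\<omega>. (norm (grad_mapping (iterate \<omega> k t)))\<^sup>2)"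

definition lyapunov :: "nat \<Rightarrow> nat \<Rightarrow> real" where
  "lyapunov k t = measure_pmf.expectation samples
     (\<lambda>\<omega>. Phi (iterate \<omega> k t) + lyap_coeff t * (norm (iterate \<omega> k t - snapshot \<omega> k))\<^sup>2)"

lemma lyapunov_Suc:
  assumes "k \<in> {1..S}" "t \<in> {1..m}"
  shows "lyapunov k (Suc t) \<le> lyapunov k t - stepsize / 6 * expected_gm_sq k t"
  using expected_step_descent[OF assms lyap_coeff_nonneg lyap_coeff_small[OF assms(2)]]
  unfolding lyapunov_def expected_gm_sq_def lyap_coeff_Suc[OF assms(2)] .

lemma lyapunov_epoch:
  assumes "k \<in> {1..S}"
  shows "lyapunov k (Suc m) \<le> lyapunov k 1 - stepsize / 6 * (\<Sum>t=1..m. expected_gm_sq k t)"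
proof -
  have "t \<le> m \<Longrightarrow> lyapunov k (Suc t) \<le> lyapunov k 1 - stepsize / 6 * (\<Sum>s=1..t. expected_gm_sq k s)" for t
  proof (induction t)
    case (Suc t)
    then have "lyapunov k (Suc (Suc t)) \<le> lyapunov k (Suc t) - stepsize / 6 * expected_gm_sq k (Suc t)"
      using assms by (intro lyapunov_Suc) auto
    with Suc show ?case
      by (simp add: algebra_simps)
  qed simp
  then show ?thesis
    by simp
qed

lemma expected_Phi_snapshot:
  "k \<le> S \<Longrightarrow> measure_pmf.expectation samples (\<lambda>\<omega>. Phi (snapshot \<omega> (Suc k)))
    \<le> Phi w1 - stepsize / 6 * (\<Sum>k'=1..k. \<Sum>t=1..m. expected_gm_sq k' t)"
proof (induction k)
  case (Suc k)
  have "measure_pmf.expectation samples (\<lambda>\<omega>. Phi (snapshot \<omega> (Suc (Suc k)))) = lyapunov (Suc k) (Suc m)"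
    by (simp add: lyapunov_def iterate_last lyap_coeff_last)
  also have "\<dots> \<le> lyapunov (Suc k) 1 - stepsize / 6 * (\<Sum>t=1..m. expected_gm_sq (Suc k) t)"
    using Suc.prems by (intro lyapunov_epoch) simp
  also have "lyapunov (Suc k) 1 = measure_pmf.expectation samples (\<lambda>\<omega>. Phi (snapshot \<omega> (Suc k)))"
    unfolding lyapunov_def iterate_1 by simp
  finally show ?case
    using Suc by (simp add: algebra_simps)
qed (simp add: snapshot_def)

lemma expectation_random_iterate:
  fixes X :: "'a \<Rightarrow> real"
  shows "measure_pmf.expectation (pair_pmf samples (pmf_of_set ({1..S} \<times> {1..m})))
      (\<lambda>(\<omega>, (k, t)). X (iterate \<omega> k t))
    = (\<Sum>k=1..S. \<Sum>t=1..m. measure_pmf.expectation samples (\<lambda>\<omega>. X (iterate \<omega> k t))) / real (S * m)"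
proof -
  have fin: "finite (set_pmf (pmf_of_set ({1..S} \<times> {1..m})))"
    using S_pos m_pos by simp
  have "measure_pmf.expectation (pair_pmf samples (pmf_of_set ({1..S} \<times> {1..m})))
      (\<lambda>(\<omega>, (k, t)). X (iterate \<omega> k t))
    = measure_pmf.expectation samples (\<lambda>\<omega>. measure_pmf.expectation (pmf_of_set ({1..S} \<times> {1..m}))
        (\<lambda>z. X (iterate \<omega> (fst z) (snd z))))"
    by (subst expectation_pair_pmf_iterated[OF finite_samples fin]) (simp add: case_prod_beta)
  also have "\<dots> = measure_pmf.expectation samples
      (\<lambda>\<omega>. (\<Sum>z\<in>{1..S} \<times> {1..m}. X (iterate \<omega> (fst z) (snd z))) / real (S * m))"
    using S_pos m_pos
    by (intro Bochner_Integration.integral_cong refl) (simp add: integral_pmf_of_set card_cartesian_product)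
  also have "\<dots> = (\<Sum>k=1..S. \<Sum>t=1..m. measure_pmf.expectation samples (\<lambda>\<omega>. X (iterate \<omega> k t))) / real (S * m)"
    by (simp add: integrable_samples sum.cartesian_product case_prod_beta)
  finally show ?thesis .
qed

lemma expected_grad_mapping_bound:
  assumes wstar: "\<And>w. ereal (F wstar) + h wstar \<le> ereal (F w) + h w"
  shows "measure_pmf.expectation (pair_pmf samples (pmf_of_set ({1..S} \<times> {1..m})))
      (\<lambda>(\<omega>, (k, t)). (norm (grad_mapping (iterate \<omega> k t)))\<^sup>2)
    \<le> 36 * L_lam * (Phi w1 - Phi wstar) / real (S * m)"
proof -
  have "measure_pmf.expectation samples (\<lambda>_. Phi wstar)
      \<le> measure_pmf.expectation samples (\<lambda>\<omega>. Phi (snapshot \<omega> (Suc S)))"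
    by (intro integral_mono integrable_samples minimizer_Phi(2)[OF wstar snapshot_finite])
  then have "Phi wstar \<le> measure_pmf.expectation samples (\<lambda>\<omega>. Phi (snapshot \<omega> (Suc S)))"
    by simp
  also have "\<dots> \<le> Phi w1 - stepsize / 6 * (\<Sum>k=1..S. \<Sum>t=1..m. expected_gm_sq k t)"
    by (rule expected_Phi_snapshot) simp
  finally have "(\<Sum>k=1..S. \<Sum>t=1..m. expected_gm_sq k t) \<le> 36 * L_lam * (Phi w1 - Phi wstar)"
    using stepsize_pos L_lam_pos by (simp add: stepsize_def field_simps)
  moreover have "measure_pmf.expectation (pair_pmf samples (pmf_of_set ({1..S} \<times> {1..m})))
      (\<lambda>(\<omega>, (k, t)). (norm (grad_mapping (iterate \<omega> k t)))\<^sup>2)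
    = (\<Sum>k=1..S. \<Sum>t=1..m. expected_gm_sq k t) / real (S * m)"
    unfolding expected_gm_sq_def by (rule expectation_random_iterate)
  ultimately show ?thesis
    by (simp add: divide_right_mono)
qed

end

context vrspa_problem
begin

lemma ereal_F_plus_finite: "h w < \<infinity> \<Longrightarrow> ereal (F w) + h w = ereal (Phi w)"
  unfolding Phi_def plus_ereal.simps(1)[symmetric] by simp

lemma expected_grad_mapping_bound_ereal:
  assumes "S > 0" "m > 0" and wstar: "\<And>w. ereal (F wstar) + h wstar \<le> ereal (F w) + h w"
  shows "ereal (measure_pmf.expectation (pair_pmf (sample_pmf n S m (m\<^sup>2)) (pmf_of_set ({1..S} \<times> {1..m})))
      (\<lambda>(\<omega>, (R, T)). (norm (grad_mapping (vrspa_iter n m (m\<^sup>2) df \<zeta> h lam stepsize \<omega> w1 R T)))\<^sup>2))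
    \<le> 36 * ((ereal (F w1) + h w1) - (ereal (F wstar) + h wstar)) * ereal (L_lam / real (S * m))"
proof (cases "h w1 < \<infinity>")
  case True
  interpret vrspa_run h n L f df g \<zeta> lam S m w1
    using assms(1,2) True by unfold_locales
  have "36 * ((ereal (F w1) + h w1) - (ereal (F wstar) + h wstar)) * ereal (L_lam / real (S * m))
      = ereal (36 * L_lam * (Phi w1 - Phi wstar) / real (S * m))"
    by (simp add: ereal_F_plus_finite[OF True] ereal_F_plus_finite[OF minimizer_Phi(1)[OF wstar]])
  with expected_grad_mapping_bound[OF wstar] show ?thesis
    by (simp add: samples_def iterate_def batch_def)
next
  case False
  then have "(ereal (F w1) + h w1) - (ereal (F wstar) + h wstar) = \<infinity>"
    using ereal_F_plus_finite[OF minimizer_Phi(1)[OF wstar]] by simp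
  then show ?thesis
    using L_lam_pos assms(1,2) by simp
qed

end

theorem lemma7:
  fixes n S m :: nat and L \<theta> :: real
    and f :: "nat \<Rightarrow> 'a::euclidean_space \<Rightarrow> real" and df :: "nat \<Rightarrow> 'a \<Rightarrow> 'a"
    and g :: "'a \<Rightarrow> real" and \<zeta> :: "real \<Rightarrow> 'a \<Rightarrow> 'a"
    and h :: "'a \<Rightarrow> ereal" and w1 wstar :: 'a
  assumes n_pos: "n > 0"
    and f_grad: "\<And>j x. j \<in> {1..n} \<Longrightarrow> (f j has_derivative (\<lambda>v. df j x \<bullet> v)) (at x)"
    and f_smooth: "\<And>j x y. j \<in> {1..n} \<Longrightarrow> norm (df j x - df j y) \<le> L * norm (x - y)"
    and \<zeta>_min: "\<And>lam w x. lam > 0 \<Longrightarrow>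
       1 / (2 * lam) * (norm (w - \<zeta> lam w))\<^sup>2 + g (\<zeta> lam w) \<le> 1 / (2 * lam) * (norm (w - x))\<^sup>2 + g x"
    and h_proper: "proper_fun h" and h_closed: "closed_fun h" and h_convex: "convex_fun h"
    and S_pos: "S > 0" and m_pos: "m > 0"
    and wstar_min: "\<And>w. ereal ((1 / real n) * (\<Sum>j=1..n. f j wstar)
                              + env (real (S * m) powr (- \<theta>)) g \<zeta> wstar) + h wstar
                     \<le> ereal ((1 / real n) * (\<Sum>j=1..n. f j w)
                              + env (real (S * m) powr (- \<theta>)) g \<zeta> w) + h w"
  shows
    "(let b = m\<^sup>2; lam = real (S * m) powr (- \<theta>); Llam = L + real (S * m) powr \<theta>;
          \<gamma> = 1 / (6 * Llam);
          \<Phi> = (\<lambda>w. ereal ((1 / real n) * (\<Sum>j=1..n. f j w) + env lam g \<zeta> w) + h w);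
          Gmap = (\<lambda>w. (1 / \<gamma>) *\<^sub>R (w - prox \<gamma> h (w - \<gamma> *\<^sub>R
                     (full_grad n df w + (1 / lam) *\<^sub>R (w - \<zeta> lam w)))));
          D = 36 * (\<Phi> w1 - \<Phi> wstar)
      in ereal (measure_pmf.expectation
                  (pair_pmf (sample_pmf n S m b) (pmf_of_set ({1..S} \<times> {1..m})))
                  (\<lambda>(\<omega>, (R, T)). (norm (Gmap (vrspa_iter n m b df \<zeta> h lam \<gamma> \<omega> w1 R T)))\<^sup>2))
         \<le> D * ereal ((L + real (S * m) powr \<theta>) / real (S * m)))"
proof -
  define lam where "lam = real (S * m) powr (- \<theta>)"
  have "lam > 0" and inv_lam: "1 / lam = real (S * m) powr \<theta>"
    using S_pos m_pos by (simp_all add: lam_def powr_minus divide_inverse)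
  interpret vrspa_problem h n L f df g \<zeta> lam
    using n_pos f_grad f_smooth \<zeta>_min[OF \<open>lam > 0\<close>] h_proper h_closed h_convex \<open>lam > 0\<close>
    by unfold_locales auto
  have "ereal (F wstar) + h wstar \<le> ereal (F w) + h w" for w
    using wstar_min[of w, folded lam_def] by (simp add: F_def)
  from expected_grad_mapping_bound_ereal[OF S_pos m_pos this]
  show ?thesis
    unfolding Let_def lam_def[symmetric]
    by (simp add: L_lam_def inv_lam stepsize_def grad_mapping_def grad_F_def F_def)
qed

end
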